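(* For every $\tilde{\mathbb N}$-composition $\alpha$, $$M_\alpha=\sum_{\beta\preceq\alpha}(-1)^{\ell(\beta)-\ell(\alpha)}c_{\alpha,\beta}F_\beta,$$ where, writing $\alpha=(\varepsilon^{i_1},\alpha_1,\dots,\varepsilon^{i_k},\alpha_k,\varepsilon^{i_{k+1}})$ and $\beta=(\varepsilon^{j_1},\beta_1,\dots,\varepsilon^{j_k},\beta_k,\varepsilon^{j_{k+1}})$ compatibly as in the definition of $\preceq$, $c_{\alpha,\beta}=\binom{i_1}{j_1}\cdots\binom{i_k}{j_k}\binom{i_{k+1}-1}{j_{k+1}-1}$ with $\binom{-1}{-1}=1$.
   Context: $\tilde{\mathbb N}=\mathbb N\cup\{\varepsilon\}$ with $0+\varepsilon=\varepsilon+\varepsilon=\varepsilon$ and $n+\varepsilon=n$ for integers $n\ge1$. $\mathbf{k}$ is a commutative ring containing $\mathbb Q$, and $\mathbf{k}[[X]]_{\tilde{\mathbb N}}$, $X=\{x_1<x_2<\cdots\}$, is the algebra of possibly infinite linear combinations of formal monomials $\prod x_i^{f(x_i)}$ with $f$ finitely supported $\tilde{\mathbb N}$-valued, multiplied by adding exponents in $\tilde{\mathbb N}$. An $\tilde{\mathbb N}$-composition is a finite sequence of elements of $\{\varepsilon,1,2,\dots\}$, $\ell$ its length, $\varepsilon^i$ denotes $i$ consecutive entries $\varepsilon$. $M_\alpha=\sum_{1\le i_1<\cdots<i_k}x_{i_1}^{\alpha_1}\cdots x_{i_k}^{\alpha_k}$. For compositions $\sigma,\tau$ of positive integers with the same sum,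 $\sigma\preceq\tau$ means $\mathrm{set}(\tau)\subseteq\mathrm{set}(\sigma)$, $\mathrm{set}((s_1,\dots,s_m))=\{s_1,s_1+s_2,\dots,s_1+\cdots+s_{m-1}\}$. For $\tilde{\mathbb N}$-compositions, $\gamma\preceq\delta$ means they can be written $\gamma=(\varepsilon^{i_1},\gamma_1,\dots,\varepsilon^{i_k},\gamma_k,\varepsilon^{i_{k+1}})$, $\delta=(\varepsilon^{j_1},\delta_1,\dots,\varepsilon^{j_k},\delta_k,\varepsilon^{j_{k+1}})$ with $i_p,j_p\ge0$, either $i_{k+1}=j_{k+1}=0$ or both $\ge1$, $\gamma_l,\delta_l$ nonempty compositions of positive integers with $|\gamma_l|=|\delta_l|$, $\gamma_l\preceq\delta_l$, and $i_p\le j_p$ for all $p$. For $\alpha=(\varepsilon^{i_1},s_1,\dots,\varepsilon^{i_k},s_k,\varepsilon^{i_{k+1}})$ with $s_j$ positive integers, $a_j=i_1+s_1+\cdots+i_j+s_j$, $\mathrm{set}(\alpha)=\{a_1,\dots,a_k\}$, $N=a_k+i_{k+1}$, $a_0=0$, and $F_\alpha=\sum x_{n_1}^{e_1}\cdots x_{n_N}^{e_N}$ over $1\le n_1\le\cdots\le n_N$ with $n_\ell<n_{\ell+1}$ for $\ell\in\mathrm{set}(\alpha)$, $\ell<N$, where $e_m=\varepsilon$ if $a_{j-1}<m\le a_{j-1}+i_j$ for some $j\le k$ or $m>a_k$, and $e_m=1$ otherwise. *)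

theory Defs
  imports Main
begin

text \<open>Exponents: the monoid N-tilde extended by the exponent 0 (absence of a variable).
  Eps is epsilon, Num n is the integer n (Num 0 = exponent zero).\<close>
datatype ntil = Eps | Num nat

fun tadd :: "ntil \<Rightarrow> ntil \<Rightarrow> ntil" where
  "tadd Eps Eps = Eps"
| "tadd (Num 0) Eps = Eps"
| "tadd Eps (Num 0) = Eps"
| "tadd (Num n) Eps = Num n"
| "tadd Eps (Num n) = Num n"
| "tadd (Num a) (Num b) = Num (a + b)"

text \<open>Monomials are functions from variable indices (x_i with i >= 1) to exponents,
  Num 0 meaning the variable is absent.  The monomial x_{n_1}^{e_1} ... x_{n_N}^{e_N}: \<close>
definition mono_of :: "(nat \<times> ntil) list \<Rightarrow> (nat \<Rightarrow> ntil)" where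
  "mono_of xs = foldr (\<lambda>(n, e) m. m(n := tadd (m n) e)) xs (\<lambda>_. Num 0)"

text \<open>Elements of k[[X]] are given by their coefficient functions on monomials.
  The sum of the monomials f t over t in T has coefficient (number of t with f t = m) at m.\<close>
definition series_of :: "'b set \<Rightarrow> ('b \<Rightarrow> (nat \<Rightarrow> ntil)) \<Rightarrow> (nat \<Rightarrow> ntil) \<Rightarrow> 'k::comm_ring_1" where
  "series_of T f m = of_nat (card {t \<in> T. f t = m})"

definition ncomp :: "ntil list \<Rightarrow> bool" where
  "ncomp \<alpha> \<longleftrightarrow> (\<forall>a \<in> set \<alpha>. a \<noteq> Num 0)"

definition M_fun :: "ntil list \<Rightarrow> (nat \<Rightarrow> ntil) \<Rightarrow> 'k::comm_ring_1" where
  "M_fun \<alpha> = series_of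
     {t :: nat list. length t = length \<alpha> \<and> sorted_wrt (<) t \<and> (\<forall>x \<in> set t. 1 \<le> x)}
     (\<lambda>t. mono_of (zip t \<alpha>))"

text \<open>Expansion of alpha into the exponent sequence e_1..e_N, each paired with a flag telling
  whether its position lies in set(alpha) (i.e. a strict inequality follows).\<close>
fun expand_entry :: "ntil \<Rightarrow> (ntil \<times> bool) list" where
  "expand_entry Eps = [(Eps, False)]"
| "expand_entry (Num s) = replicate (s - 1) (Num 1, False) @ [(Num 1, True)]"

definition expand :: "ntil list \<Rightarrow> (ntil \<times> bool) list" where
  "expand \<alpha> = concat (map expand_entry \<alpha>)"

definition F_fun :: "ntil list \<Rightarrow> (nat \<Rightarrow> ntil) \<Rightarrow> 'k::comm_ring_1" where
  "F_fun \<alpha> = series_of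
     {n :: nat list. length n = length (expand \<alpha>) \<and> sorted n \<and> (\<forall>x \<in> set n. 1 \<le> x) \<and>
        (\<forall>l. Suc l < length n \<and> snd (expand \<alpha> ! l) \<longrightarrow> n ! l < n ! Suc l)}
     (\<lambda>n. mono_of (zip n (map fst (expand \<alpha>))))"

definition cset :: "nat list \<Rightarrow> nat set" where
  "cset \<sigma> = {sum_list (take i \<sigma>) | i. 0 < i \<and> i < length \<sigma>}"

definition comp_le :: "nat list \<Rightarrow> nat list \<Rightarrow> bool" where
  "comp_le \<sigma> \<tau> \<longleftrightarrow> sum_list \<sigma> = sum_list \<tau> \<and> cset \<tau> \<subseteq> cset \<sigma>"

text \<open>(eps^{i_1}, g_1, ..., eps^{i_k}, g_k, eps^{e}) from blocks [(i_1,g_1),...,(i_k,g_k)] and e.\<close>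
definition assemble :: "(nat \<times> nat list) list \<Rightarrow> nat \<Rightarrow> ntil list" where
  "assemble bs e = concat (map (\<lambda>(i, g). replicate i Eps @ map Num g) bs) @ replicate e Eps"

definition compat_dec :: "ntil list \<Rightarrow> ntil list \<Rightarrow> (nat \<times> nat list) list \<Rightarrow> nat
    \<Rightarrow> (nat \<times> nat list) list \<Rightarrow> nat \<Rightarrow> bool" where
  "compat_dec \<gamma> \<delta> bs e cs f \<longleftrightarrow>
     \<gamma> = assemble bs e \<and> \<delta> = assemble cs f \<and> length bs = length cs \<and>
     ((e = 0 \<and> f = 0) \<or> (1 \<le> e \<and> 1 \<le> f)) \<and> e \<le> f \<and>
     (\<forall>p < length bs. fst (bs ! p) \<le> fst (cs ! p) \<and>
        snd (bs ! p) \<noteq> [] \<and> snd (cs ! p) \<noteq> [] \<and>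
        (\<forall>x \<in> set (snd (bs ! p)). 0 < x) \<and> (\<forall>x \<in> set (snd (cs ! p)). 0 < x) \<and>
        comp_le (snd (bs ! p)) (snd (cs ! p)))"

definition tprec :: "ntil list \<Rightarrow> ntil list \<Rightarrow> bool" where
  "tprec \<gamma> \<delta> \<longleftrightarrow> (\<exists>bs e cs f. compat_dec \<gamma> \<delta> bs e cs f)"

text \<open>c_{alpha,beta}, computed from compatible decompositions (beta \<preceq> alpha);
  binom(-1,-1) = 1 corresponds to the case of empty final eps-runs.\<close>
definition ccoef :: "ntil list \<Rightarrow> ntil list \<Rightarrow> nat" where
  "ccoef \<alpha> \<beta> = (SOME v. \<exists>bs e cs f. compat_dec \<beta> \<alpha> bs e cs f \<and>
      v = (\<Prod>p < length cs. fst (cs ! p) choose fst (bs ! p)) *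
          (if f = 0 then 1 else (f - 1) choose (e - 1)))"

end

theory Submission
  imports Defs
begin

text \<open>Take the coefficient of a monomial whose nonzero exponents, read in increasing order of the
  variables, form the word w.  For M_\<alpha> it is [w = \<alpha>]; for F_\<beta> it is the number of ways to cut
  the exponent sequence of F_\<beta> into consecutive blocks summing to the letters of w without
  crossing a forced strict increase of the indices.  The theorem thus becomes the identity
  \<Sum>_{\<beta> \<preceq> \<alpha>} \<plusminus>c_{\<alpha>,\<beta>} #splits(\<beta>, w) = [w = \<alpha>], proved by induction on \<alpha> by peeling off its
  first block \<epsilon>^i a.  The splittings of the first block of a refinement and of the rest decouple;
  the alternating sum over the compositions of a collapses because merging the first two parts
  is a sign-reversing involution, and the factors binom(i, j) of the leading \<epsilon>-runs are removed
  by binomial inversion.\<close>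

section \<open>Exponent arithmetic\<close>

lemma tadd_Num0_left [simp]: "tadd (Num 0) x = x"
  by (cases x) auto

lemma tadd_Num0_right [simp]: "tadd x (Num 0) = x"
  by (cases x) auto

lemma tadd_Eps_right: "tadd x Eps = (if x = Num 0 then Eps else x)"
proof (cases x)
  case (Num n)
  then show ?thesis by (cases n) auto
qed auto

lemma tadd_eq_Num0_iff [simp]: "tadd x y = Num 0 \<longleftrightarrow> x = Num 0 \<and> y = Num 0"
  by (cases "(x, y)" rule: tadd.cases) auto

definition tsum :: "ntil list \<Rightarrow> ntil" where
  "tsum es = foldr (\<lambda>e acc. tadd acc e) es (Num 0)"

lemma tsum_Nil [simp]: "tsum [] = Num 0"
  by (simp add: tsum_def)

lemma tsum_Cons [simp]: "tsum (e # es) = tadd (tsum es) e"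
  by (simp add: tsum_def)

lemma tsum_replicate_Eps: "0 < k \<Longrightarrow> tsum (replicate k Eps) = Eps"
proof (induction k)
  case (Suc k)
  then show ?case by (cases k) (auto simp: tadd_Eps_right)
qed simp

lemma tsum_replicate_Num1 [simp]: "tsum (replicate k (Num (Suc 0))) = Num k"
  by (induction k) auto

lemma tsum_Eps_prefix: "tsum z = Num c \<Longrightarrow> 0 < c \<Longrightarrow> tsum (replicate r Eps @ z) = Num c"
  by (induction r) (auto simp: tadd_Eps_right)

section \<open>Splittings of exponent lists into blocks\<close>

text \<open>An exponent list pairs each exponent with a flag requiring a strict increase of the
  variable index right after it.  nsplits xs w counts the ways of cutting xs into consecutive
  nonempty blocks whose exponent sums are the letters of w, flags being allowed only at the ends
  of blocks; it is the coefficient of a monomial with exponent word w in the series of xs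
  (lemma card_fillings).\<close>

definition block :: "(ntil \<times> bool) list \<Rightarrow> nat \<Rightarrow> ntil \<Rightarrow> bool" where
  "block xs k c \<longleftrightarrow> (\<forall>l < k - 1. \<not> snd (xs ! l)) \<and> tsum (map fst (take k xs)) = c"

fun nsplits :: "(ntil \<times> bool) list \<Rightarrow> ntil list \<Rightarrow> nat" where
  "nsplits xs [] = (if xs = [] then 1 else 0)"
| "nsplits xs (c # w) = (\<Sum>k\<in>{1..length xs}. if block xs k c then nsplits (drop k xs) w else 0)"

declare nsplits.simps(2) [simp del]

lemma sum_eq_single:
  assumes "finite A" "\<And>k. k \<in> A \<Longrightarrow> k \<noteq> a \<Longrightarrow> f k = 0"
  shows "sum f A = (if a \<in> A then f a else 0)"
proof -
  have "sum f A = sum (\<lambda>k. if k = a then f a else 0) A"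
    using assms(2) by (intro sum.cong) auto
  then show ?thesis
    using assms(1) by simp
qed

abbreviation marked :: "ntil list \<Rightarrow> (ntil \<times> bool) list" where
  "marked \<alpha> \<equiv> map (\<lambda>x. (x, True)) \<alpha>"

lemma nsplits_marked: "nsplits (marked \<alpha>) w = (if w = \<alpha> then 1 else 0)"
proof (induction w arbitrary: \<alpha>)
  case (Cons c w)
  show ?case
  proof (cases \<alpha>)
    case Nil
    then show ?thesis by (simp add: nsplits.simps)
  next
    case \<alpha>: (Cons a \<alpha>')
    have "nsplits (marked \<alpha>) (c # w) =
        (if block (marked \<alpha>) 1 c then nsplits (drop 1 (marked \<alpha>)) w else 0)"
      unfolding nsplits.simps length_map
      by (subst sum_eq_single[where a=1]) (auto simp: block_def \<alpha> dest!: spec[where x=0])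
    then show ?thesis
      using Cons.IH by (auto simp: block_def \<alpha>)
  qed
qed simp

lemma nsplits_Nil_left: "nsplits [] w = (if w = [] then 1 else 0)"
  by (cases w) (auto simp: nsplits.simps)

lemma sum_nsplits_Nil_prefix: "(\<Sum>u\<le>length w. nsplits [] (take u w) * f u) = f 0"
proof -
  have "(\<Sum>u\<le>length w. nsplits [] (take u w) * f u) = (\<Sum>u\<le>length w. if u = 0 then f 0 else 0)"
    by (intro sum.cong) (auto simp: nsplits_Nil_left)
  then show ?thesis
    by simp
qed

lemma block_append: "k \<le> length xs \<Longrightarrow> block (xs @ ys) k c \<longleftrightarrow> block xs k c"
  by (auto simp: block_def nth_append)

lemma not_block_past_flag:
  assumes "xs \<noteq> []" "snd (last xs)" "length xs < k"
  shows "\<not> block (xs @ ys) k c"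
proof
  assume "block (xs @ ys) k c"
  moreover have "length xs - 1 < k - 1"
    using assms(1,3) by (cases xs) auto
  ultimately have "\<not> snd ((xs @ ys) ! (length xs - 1))"
    unfolding block_def by blast
  then show False
    using assms(1,2) by (simp add: nth_append last_conv_nth)
qed

text \<open>Since a flag closes the last block of xs, no block of xs @ ys straddles the junction.\<close>

lemma nsplits_append_Cons:
  assumes "xs \<noteq> []" "snd (last xs)"
  shows "nsplits (xs @ ys) (c # w) =
    (\<Sum>k\<in>{1..length xs}. if block xs k c then nsplits (drop k xs @ ys) w else 0)"
  unfolding nsplits.simps
proof (rule sum.mono_neutral_cong_right)
  show "\<forall>k\<in>{1..length (xs @ ys)} - {1..length xs}.
      (if block (xs @ ys) k c then nsplits (drop k (xs @ ys)) w else 0) = 0"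
    using not_block_past_flag[OF assms] by auto
qed (auto simp: block_append)

lemma nsplits_append:
  assumes "xs \<noteq> []" "snd (last xs)"
  shows "nsplits (xs @ ys) w = (\<Sum>u\<le>length w. nsplits xs (take u w) * nsplits ys (drop u w))"
  using assms
proof (induction w arbitrary: xs)
  case (Cons c w)
  have "nsplits (xs @ ys) (c # w) =
      (\<Sum>k\<in>{1..length xs}. if block xs k c then nsplits (drop k xs @ ys) w else 0)"
    by (rule nsplits_append_Cons[OF Cons.prems])
  also have "\<dots> = (\<Sum>k\<in>{1..length xs}. if block xs k c
      then (\<Sum>u\<le>length w. nsplits (drop k xs) (take u w) * nsplits ys (drop u w)) else 0)"
  proof (intro sum.cong refl)
    fix k
    assume k: "k \<in> {1..length xs}"
    have "nsplits (drop k xs @ ys) w =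
        (\<Sum>u\<le>length w. nsplits (drop k xs) (take u w) * nsplits ys (drop u w))"
    proof (cases "k = length xs")
      case True
      then show ?thesis by (simp add: sum_nsplits_Nil_prefix)
    next
      case False
      then have "drop k xs \<noteq> []" "snd (last (drop k xs))"
        using k Cons.prems by auto
      then show ?thesis by (rule Cons.IH)
    qed
    then show "(if block xs k c then nsplits (drop k xs @ ys) w else 0) = (if block xs k c
        then (\<Sum>u\<le>length w. nsplits (drop k xs) (take u w) * nsplits ys (drop u w)) else 0)"
      by simp
  qed
  also have "\<dots> = (\<Sum>u\<le>length w.
      (\<Sum>k\<in>{1..length xs}. if block xs k c then nsplits (drop k xs) (take u w) else 0)
        * nsplits ys (drop u w))"
  proof -
    have "(\<Sum>k\<in>{1..length xs}. if block xs k c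
        then (\<Sum>u\<le>length w. nsplits (drop k xs) (take u w) * nsplits ys (drop u w)) else 0) =
      (\<Sum>k\<in>{1..length xs}. \<Sum>u\<le>length w.
        (if block xs k c then nsplits (drop k xs) (take u w) else 0) * nsplits ys (drop u w))"
      by (intro sum.cong) auto
    also have "\<dots> = (\<Sum>u\<le>length w. \<Sum>k\<in>{1..length xs}.
        (if block xs k c then nsplits (drop k xs) (take u w) else 0) * nsplits ys (drop u w))"
      by (rule sum.swap)
    finally show ?thesis
      by (simp add: sum_distrib_right)
  qed
  also have "\<dots> = (\<Sum>u\<le>length w. nsplits xs (c # take u w) * nsplits ys (drop u w))"
    by (simp add: nsplits.simps)
  also have "\<dots> = (\<Sum>u\<le>length (c # w). nsplits xs (take u (c # w)) * nsplits ys (drop u (c # w)))"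
    by (simp only: length_Cons sum.atMost_Suc_shift take_Suc_Cons drop_Suc_Cons take_0
        nsplits.simps(1)) (use Cons.prems in simp)
  finally show ?case .
qed simp

abbreviation eps_run :: "nat \<Rightarrow> (ntil \<times> bool) list" where
  "eps_run r \<equiv> replicate r (Eps, False)"

lemma tsum_take_ones:
  assumes "map fst y = replicate (length y) (Num 1)" "k \<le> length y"
  shows "tsum (map fst (take k y)) = Num k"
proof -
  have "map fst (take k y) = take k (map fst y)"
    by (simp add: take_map)
  also have "\<dots> = replicate k (Num 1)"
    using assms by simp
  finally show ?thesis by simp
qed

lemma block_eps_run: "1 \<le> k \<Longrightarrow> k \<le> r \<Longrightarrow> block (eps_run r @ y) k c \<longleftrightarrow> c = Eps"
  by (auto simp: block_def nth_append tsum_replicate_Eps)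

lemma block_eps_run_shift:
  assumes y: "map fst y = replicate (length y) (Num 1)" and k: "1 \<le> k" "k \<le> length y"
  shows "block (eps_run r @ y) (r + k) c \<longleftrightarrow> block y k c"
proof -
  have "(\<forall>l < r + k - 1. \<not> snd ((eps_run r @ y) ! l)) \<longleftrightarrow> (\<forall>l < k - 1. \<not> snd (y ! l))"
  proof
    assume H: "\<forall>l < r + k - 1. \<not> snd ((eps_run r @ y) ! l)"
    show "\<forall>l < k - 1. \<not> snd (y ! l)"
    proof (intro allI impI)
      fix l
      assume "l < k - 1"
      then show "\<not> snd (y ! l)"
        using H[rule_format, of "r + l"] k by (simp add: nth_append)
    qed
  next
    assume H: "\<forall>l < k - 1. \<not> snd (y ! l)"
    show "\<forall>l < r + k - 1. \<not> snd ((eps_run r @ y) ! l)"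
      using H k by (auto simp: nth_append)
  qed
  moreover have "tsum (map fst (take (r + k) (eps_run r @ y))) = tsum (map fst (take k y))"
    using k tsum_take_ones[OF y k(2)] by (simp add: tsum_Eps_prefix)
  ultimately show ?thesis
    by (simp add: block_def)
qed

lemma sum_atLeast1_add_split:
  "(\<Sum>k\<in>{1..r + (n::nat)}. f k) = (\<Sum>k\<in>{1..r}. f k) + (\<Sum>k\<in>{1..n}. f (r + k) :: 'a::comm_monoid_add)"
proof (induction n)
  case (Suc n)
  have "{1..r + Suc n} = insert (Suc (r + n)) {1..r + n}" "{1..Suc n} = insert (Suc n) {1..n}"
    by auto
  then show ?case
    using Suc by (simp add: ac_simps)
qed simp

lemma nsplits_eps_run_Cons:
  assumes "map fst y = replicate (length y) (Num 1)"
  shows "nsplits (eps_run r @ y) (c # v) =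
    (\<Sum>k\<in>{1..r}. if c = Eps then nsplits (eps_run (r - k) @ y) v else 0) +
    (\<Sum>k\<in>{1..length y}. if block y k c then nsplits (drop k y) v else 0)"
  unfolding nsplits.simps length_append length_replicate sum_atLeast1_add_split
  using block_eps_run block_eps_run_shift[OF assms] by (intro arg_cong2[where f="(+)"] sum.cong) auto

lemma nsplits_eps_run_skip:
  assumes y: "y \<noteq> []" "map fst y = replicate (length y) (Num 1)"
    and v: "v = [] \<or> hd v \<noteq> Eps"
  shows "nsplits (eps_run r @ y) v = nsplits y v"
proof (cases v)
  case (Cons c v')
  then have "c \<noteq> Eps"
    using v by simp
  then show ?thesis
    unfolding Cons nsplits_eps_run_Cons[OF y(2)] by (simp add: nsplits.simps)
qed (use y in simp)

lemma sum_choose_below: "(\<Sum>r<j. r choose b) = j choose Suc b"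
  by (induction j) auto

lemma nsplits_eps_run_choose:
  assumes y: "y \<noteq> []" "map fst y = replicate (length y) (Num 1)"
    and v: "v = [] \<or> hd v \<noteq> Eps"
  shows "nsplits (eps_run j @ y) (replicate b Eps @ v) = (j choose b) * nsplits y v"
proof (induction b arbitrary: j)
  case 0
  then show ?case
    using nsplits_eps_run_skip[OF y v] by simp
next
  case (Suc b)
  have no_Eps_block: "\<not> block y k Eps" if "k \<in> {1..length y}" for k
    using that tsum_take_ones[OF y(2)] by (simp add: block_def)
  have "nsplits (eps_run j @ y) (replicate (Suc b) Eps @ v) = (\<Sum>k\<in>{1..j}. (j - k choose b) * nsplits y v)"
    using Suc.IH no_Eps_block by (simp add: nsplits_eps_run_Cons[OF y(2)])
  also have "\<dots> = (\<Sum>r<j. r choose b) * nsplits y v"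
    using sum.atLeastLessThan_rev_at_least_Suc_atMost[of "\<lambda>r. r choose b" 0 j]
    by (simp add: sum_distrib_right atLeast0LessThan)
  finally show ?case
    by (simp add: sum_choose_below)
qed

definition comp_count :: "nat \<Rightarrow> nat \<Rightarrow> nat" where
  "comp_count e b =
    (if b = 0 then (if e = 0 then 1 else 0) else if e = 0 then 0 else (e - 1) choose (b - 1))"

lemma sum_comp_count: "(\<Sum>r<e. comp_count r b) = comp_count e (Suc b)"
proof (induction e)
  case (Suc e)
  then show ?case by (cases e; cases b) (auto simp: comp_count_def)
qed (simp add: comp_count_def)

lemma nsplits_eps_run: "nsplits (eps_run e) w = (if set w \<subseteq> {Eps} then comp_count e (length w) else 0)"
proof (induction w arbitrary: e)
  case Nil
  then show ?case by (simp add: comp_count_def)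
next
  case (Cons c w)
  have "nsplits (eps_run e) (c # w) = (\<Sum>k\<in>{1..e}. if c = Eps then nsplits (eps_run (e - k)) w else 0)"
    using nsplits_eps_run_Cons[of "[]" e c w, unfolded append_Nil2] by simp
  also have "\<dots> = (if set (c # w) \<subseteq> {Eps} then (\<Sum>r<e. comp_count r (length w)) else 0)"
    using Cons.IH sum.atLeastLessThan_rev_at_least_Suc_atMost[of "\<lambda>r. comp_count r (length w)" 0 e]
    by (simp add: atLeast0LessThan)
  finally show ?case
    by (simp add: sum_comp_count)
qed

lemma expand_Nil [simp]: "expand [] = []"
  by (simp add: expand_def)

lemma expand_Cons: "expand (x # xs) = expand_entry x @ expand xs"
  by (simp add: expand_def)

lemma expand_append [simp]: "expand (xs @ ys) = expand xs @ expand ys"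
  by (simp add: expand_def)

lemma expand_replicate_Eps [simp]: "expand (replicate j Eps) = eps_run j"
  by (induction j) (auto simp: expand_Cons)

definition positive :: "nat list \<Rightarrow> bool" where
  "positive h \<longleftrightarrow> (\<forall>x\<in>set h. 0 < x)"

lemma positive_simps [simp]:
  "positive []"
  "positive (x # h) \<longleftrightarrow> 0 < x \<and> positive h"
  "positive (h @ h') \<longleftrightarrow> positive h \<and> positive h'"
  by (auto simp: positive_def)

abbreviation expand_comp :: "nat list \<Rightarrow> (ntil \<times> bool) list" where
  "expand_comp h \<equiv> expand (map Num h)"

lemma expand_comp_Cons:
  "0 < s \<Longrightarrow> expand_comp (s # h) = replicate (s - 1) (Num 1, False) @ (Num 1, True) # expand_comp h"
  by (simp add: expand_Cons)

lemma map_fst_expand_comp: "positive h \<Longrightarrow> map fst (expand_comp h) = replicate (sum_list h) (Num 1)"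
proof (induction h)
  case (Cons s h)
  then obtain s' where s': "s = Suc s'"
    by (cases s) auto
  have "replicate s' (Num 1) @ Num 1 # replicate (sum_list h) (Num 1) =
      replicate (Suc s' + sum_list h) (Num 1)"
    by (simp add: replicate_add replicate_app_Cons_same)
  then show ?case
    using Cons s' by (simp add: expand_Cons)
qed simp

lemma length_expand_comp: "positive h \<Longrightarrow> length (expand_comp h) = sum_list h"
  using map_fst_expand_comp[of h] by (metis length_map length_replicate)

lemma expand_comp_all_ones:
  "positive h \<Longrightarrow> map fst (expand_comp h) = replicate (length (expand_comp h)) (Num 1)"
  using map_fst_expand_comp length_expand_comp by simp

lemma expand_comp_not_Nil: "h \<noteq> [] \<Longrightarrow> expand_comp h \<noteq> []"
  by (cases h) (auto simp: expand_Cons)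

lemma last_expand_comp: "h \<noteq> [] \<Longrightarrow> snd (last (expand_comp h))"
proof (induction h)
  case (Cons s h)
  then show ?case by (cases h) (auto simp: expand_comp_not_Nil expand_Cons)
qed simp

lemma nsplits_expand_comp_Eps: "positive h \<Longrightarrow> nsplits (expand_comp h) (Eps # v) = 0"
  unfolding nsplits.simps
  by (intro sum.neutral ballI) (auto simp: block_def tsum_take_ones[OF expand_comp_all_ones])

lemma nsplits_expand_comp_Cons_Num:
  assumes s: "0 < s" and h: "positive h"
  shows "nsplits (expand_comp (s # h)) (Num t # v) =
    (if t = s then nsplits (expand_comp h) v
     else if 0 < t \<and> t < s then nsplits (expand_comp ((s - t) # h)) v else 0)"
proof -
  let ?x = "expand_comp (s # h)"
  have x: "?x = replicate (s - 1) (Num 1, False) @ (Num 1, True) # expand_comp h"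
    using expand_comp_Cons[OF s] .
  have len: "length ?x = s + sum_list h"
    using length_expand_comp[of "s # h"] s h by simp
  have flags: "(\<forall>l < k - 1. \<not> snd (?x ! l)) \<longleftrightarrow> k \<le> s" for k
  proof
    assume H: "\<forall>l < k - 1. \<not> snd (?x ! l)"
    show "k \<le> s"
    proof (rule ccontr)
      assume "\<not> k \<le> s"
      then have "\<not> snd (?x ! (s - 1))"
        using H s by simp
      then show False
        unfolding x by (simp add: nth_append)
    qed
  next
    assume "k \<le> s"
    then show "\<forall>l < k - 1. \<not> snd (?x ! l)"
      unfolding x by (auto simp: nth_append)
  qed
  have "block ?x k (Num t) \<longleftrightarrow> k = t \<and> t \<le> s" if "k \<in> {1..length ?x}" for k
    using that flags tsum_take_ones[OF expand_comp_all_ones, of "s # h" k] s h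
    by (auto simp: block_def)
  then have "nsplits ?x (Num t # v) = (if t \<in> {1..length ?x} \<and> t \<le> s then nsplits (drop t ?x) v else 0)"
    unfolding nsplits.simps by (subst sum_eq_single[where a=t]) auto
  also have "\<dots> = (if t = s then nsplits (expand_comp h) v
     else if 0 < t \<and> t < s then nsplits (expand_comp ((s - t) # h)) v else 0)"
  proof (cases "0 < t \<and> t \<le> s")
    case True
    then have "drop t ?x = (if t = s then expand_comp h else expand_comp ((s - t) # h))"
      unfolding x using expand_comp_Cons[of "s - t" h] by (auto simp: Suc_diff_Suc simp del: list.map)
    then show ?thesis
      using True len by auto
  qed (use s in auto)
  finally show ?thesis .
qed

section \<open>Alternating sums over compositions\<close>

definition comps :: "nat \<Rightarrow> nat list set" where
  "comps a = {h. h \<noteq> [] \<and> positive h \<and> sum_list h = a}"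

lemma length_le_sum_list: "positive h \<Longrightarrow> length h \<le> sum_list h"
  by (induction h) auto

lemma finite_comps: "finite (comps a)"
proof (rule finite_subset)
  show "comps a \<subseteq> {xs. set xs \<subseteq> {0..a} \<and> length xs \<le> a}"
    using length_le_sum_list member_le_sum_list by (fastforce simp: comps_def)
  show "finite {xs. set xs \<subseteq> {0..a} \<and> length xs \<le> a}"
    by (rule finite_lists_length_le) simp
qed

lemma comps_hd_eq: "0 < t \<Longrightarrow> t < a \<Longrightarrow> {h \<in> comps a. hd h = t} = Cons t ` comps (a - t)"
proof (intro equalityI subsetI)
  fix h
  assume "0 < t" "t < a" "h \<in> {h \<in> comps a. hd h = t}"
  then show "h \<in> Cons t ` comps (a - t)"
    by (cases h) (auto simp: comps_def intro!: image_eqI[where x="tl h"])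
qed (auto simp: comps_def)

lemma comps_hd_gt:
  "0 < t \<Longrightarrow> t < a \<Longrightarrow> {h \<in> comps a. t < hd h} = (\<lambda>g. (hd g + t) # tl g) ` comps (a - t)"
proof (intro equalityI subsetI)
  fix h
  assume "0 < t" "t < a" "h \<in> {h \<in> comps a. t < hd h}"
  then show "h \<in> (\<lambda>g. (hd g + t) # tl g) ` comps (a - t)"
    by (cases h) (auto simp: comps_def intro!: image_eqI[where x="(hd h - t) # tl h"])
next
  fix h
  assume "0 < t" "t < a" "h \<in> (\<lambda>g. (hd g + t) # tl g) ` comps (a - t)"
  then show "h \<in> {h \<in> comps a. t < hd h}"
    by (auto simp: comps_def neq_Nil_conv)
qed

lemma inj_on_add_hd: "inj_on (\<lambda>g. (hd g + t) # tl g) (comps a)"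
  by (rule inj_onI) (auto simp: comps_def neq_Nil_conv)

lemma nsplits_expand_comp_Num:
  assumes "h \<in> comps a"
  shows "nsplits (expand_comp h) (Num t # v) =
    (if hd h = t then nsplits (expand_comp (tl h)) v
     else if 0 < t \<and> t < hd h then nsplits (expand_comp ((hd h - t) # tl h)) v else 0)"
proof -
  obtain s h' where "h = s # h'" "0 < s" "positive h'"
    using assms by (cases h) (auto simp: comps_def)
  then show ?thesis
    using nsplits_expand_comp_Cons_Num[of s h' t v] by auto
qed

text \<open>Compositions of a with first part t and those with first part larger than t correspond by
  merging the first two parts, resp. splitting off t; the lengths differ by one and the
  splittings of the remaining letters agree, so the terms cancel in pairs.\<close>

lemma alt_sum_comps_cancel:
  assumes t: "0 < t" "t < a"
  shows "(\<Sum>h\<in>comps a. (-1) ^ (length h + 1) * of_nat (nsplits (expand_comp h) (Num t # v)) :: 'k::comm_ring_1) = 0"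
proof -
  define X1 where "X1 h = ((-1) ^ (length h + 1) * of_nat (nsplits (expand_comp (tl h)) v) :: 'k)" for h
  define X2 where "X2 h = ((-1) ^ (length h + 1) * of_nat (nsplits (expand_comp ((hd h - t) # tl h)) v) :: 'k)" for h
  have "(\<Sum>h\<in>comps a. (-1) ^ (length h + 1) * of_nat (nsplits (expand_comp h) (Num t # v)) :: 'k) =
      (\<Sum>h\<in>comps a. (if hd h = t then X1 h else 0) + (if t < hd h then X2 h else 0))"
    using t by (intro sum.cong refl) (auto simp: nsplits_expand_comp_Num X1_def X2_def)
  also have "\<dots> = (\<Sum>h\<in>{h\<in>comps a. hd h = t}. X1 h) + (\<Sum>h\<in>{h\<in>comps a. t < hd h}. X2 h)"
    by (simp add: sum.distrib sum.inter_filter[OF finite_comps])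
  also have "\<dots> = (\<Sum>g\<in>comps (a - t). X1 (t # g) + X2 ((hd g + t) # tl g))"
    using t by (simp add: comps_hd_eq comps_hd_gt sum.reindex inj_on_add_hd sum.distrib)
  also have "\<dots> = 0"
    by (intro sum.neutral) (auto simp: X1_def X2_def comps_def neq_Nil_conv)
  finally show ?thesis .
qed

lemma alt_sum_comps_whole:
  assumes a: "0 < a"
  shows "(\<Sum>h\<in>comps a. (-1) ^ (length h + 1) * of_nat (nsplits (expand_comp h) (Num a # v)) :: 'k::comm_ring_1) =
    (if v = [] then 1 else 0)"
proof -
  have "(\<Sum>h\<in>comps a. (-1) ^ (length h + 1) * of_nat (nsplits (expand_comp h) (Num a # v)) :: 'k) =
      (if [a] \<in> comps a then (-1) ^ (length [a] + 1) * of_nat (nsplits (expand_comp [a]) (Num a # v)) else 0)"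
  proof (rule sum_eq_single[OF finite_comps])
    fix h
    assume h: "h \<in> comps a" "h \<noteq> [a]"
    obtain s h' where sh: "h = s # h'" "positive h'" "s + sum_list h' = a"
      using h(1) by (cases h) (auto simp: comps_def)
    have "hd h \<noteq> a"
    proof (cases h')
      case Nil
      then show ?thesis using sh h(2) by simp
    next
      case (Cons x h'')
      then show ?thesis using sh by simp
    qed
    moreover have "hd h \<le> a"
      using sh by simp
    ultimately show "(-1) ^ (length h + 1) * of_nat (nsplits (expand_comp h) (Num a # v)) = (0::'k)"
      using nsplits_expand_comp_Num[OF h(1)] by auto
  qed
  also have "\<dots> = (if v = [] then 1 else 0)"
    using a nsplits_expand_comp_Cons_Num[of a "[]" a v] by (auto simp: comps_def nsplits_Nil_left)
  finally show ?thesis .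
qed

lemma alt_sum_comps:
  assumes a: "0 < a"
  shows "(\<Sum>h\<in>comps a. (-1) ^ (length h + 1) * of_nat (nsplits (expand_comp h) v) :: 'k::comm_ring_1) =
    (if v = [Num a] then 1 else 0)"
proof (cases v)
  case Nil
  then show ?thesis
    by (auto simp: comps_def expand_comp_not_Nil intro!: sum.neutral)
next
  case (Cons c v')
  show ?thesis
  proof (cases c)
    case Eps
    then show ?thesis using Cons by (auto simp: nsplits_expand_comp_Eps comps_def)
  next
    case (Num t)
    consider "t = a" | "0 < t" "t < a" | "t = 0 \<or> a < t"
      by linarith
    then show ?thesis
    proof cases
      case 1
      then show ?thesis
        using alt_sum_comps_whole[OF a, of v'] Cons Num by simp
    next
      case 2
      then show ?thesis
        using alt_sum_comps_cancel[of t a v'] Cons Num by auto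
    next
      case 3
      have "nsplits (expand_comp h) v = 0" if "h \<in> comps a" for h
      proof -
        have "0 < hd h" "hd h \<le> a"
          using that by (auto simp: comps_def neq_Nil_conv)
        then show ?thesis
          using nsplits_expand_comp_Num[OF that] 3 Cons Num by auto
      qed
      then show ?thesis
        using 3 Cons Num a by auto
    qed
  qed
qed

lemma sum_atMost_add_split:
  "(\<Sum>j\<le>b + (n::nat). g j) = (\<Sum>j<b. g j) + (\<Sum>t\<le>n. g (b + t) :: 'a::comm_monoid_add)"
proof (induction n)
  case 0
  then show ?case by (simp add: lessThan_Suc_atMost[symmetric])
next
  case (Suc n)
  then show ?case by (simp add: ac_simps)
qed

lemma binomial_inversion:
  "(\<Sum>j\<le>i. (-1) ^ (i + j) * of_nat ((i choose j) * (j choose b)) :: 'k::comm_ring_1) =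
    (if b = i then 1 else 0)"
proof (cases "b \<le> i")
  case False
  then show ?thesis
    by (intro trans[OF sum.neutral]) (auto simp: binomial_eq_0)
next
  case True
  then obtain n where n: "i = b + n"
    by (metis le_add_diff_inverse)
  have "(\<Sum>j\<le>i. (-1) ^ (i + j) * of_nat ((i choose j) * (j choose b)) :: 'k) =
      (\<Sum>t\<le>n. (-1) ^ (i + (b + t)) * of_nat ((i choose (b + t)) * ((b + t) choose b)))"
    unfolding n sum_atMost_add_split by (simp add: binomial_eq_0)
  also have "\<dots> = (\<Sum>t\<le>n. (-1) ^ n * of_nat (i choose b) * ((-1) ^ t * of_nat (n choose t)))"
  proof (intro sum.cong refl)
    fix t
    assume "t \<in> {..n}"
    then have "(i choose (b + t)) * ((b + t) choose b) = (i choose b) * (n choose t)"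
      using choose_mult[of b "b + t" i] n by simp
    moreover have "i + (b + t) = 2 * b + (n + t)"
      using n by simp
    then have "(-1::'k) ^ (i + (b + t)) = (-1) ^ n * (-1) ^ t"
      by (simp only: power_add power_mult) simp
    ultimately show "(-1) ^ (i + (b + t)) * of_nat ((i choose (b + t)) * ((b + t) choose b)) =
        ((-1) ^ n * of_nat (i choose b) * ((-1) ^ t * of_nat (n choose t)) :: 'k)"
      by (simp add: ac_simps)
  qed
  also have "\<dots> = (-1) ^ n * of_nat (i choose b) * (\<Sum>t\<le>n. (-1) ^ t * of_nat (n choose t))"
    by (simp add: sum_distrib_left)
  also have "\<dots> = (if b = i then 1 else 0)"
    using n choose_alternating_sum[of n, where 'a='k] by (cases "n = 0") auto
  finally show ?thesis .
qed

lemma split_eps_prefix: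
  obtains b v where "w = replicate b Eps @ v" "v = [] \<or> hd v \<noteq> Eps"
proof -
  have "takeWhile (\<lambda>x. x = Eps) w = replicate (length (takeWhile (\<lambda>x. x = Eps) w)) Eps"
    by (metis (mono_tags, lifting) replicate_length_same set_takeWhileD)
  moreover have "dropWhile (\<lambda>x. x = Eps) w = [] \<or> hd (dropWhile (\<lambda>x. x = Eps) w) \<noteq> Eps"
    using hd_dropWhile by blast
  ultimately show ?thesis
    using that takeWhile_dropWhile_id by metis
qed

lemma eps_prefix_inj:
  assumes "replicate b Eps @ v = replicate b' Eps @ v'"
    and "v = [] \<or> hd v \<noteq> Eps" "v' = [] \<or> hd v' \<noteq> Eps"
  shows "b = b' \<and> v = v'"
  using assms
proof (induction b arbitrary: b')
  case 0
  then show ?case by (cases b') auto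
next
  case (Suc b)
  then show ?case by (cases b') auto
qed

lemma alt_sum_eps_comps:
  assumes a: "0 < a"
  shows "(\<Sum>j\<le>i. \<Sum>h\<in>comps a. (-1) ^ (i + j) * of_nat (i choose j) *
      ((-1) ^ (length h + 1) * of_nat (nsplits (eps_run j @ expand_comp h) w)) :: 'k::comm_ring_1) =
    (if w = replicate i Eps @ [Num a] then 1 else 0)"
proof -
  obtain b v where w: "w = replicate b Eps @ v" and v: "v = [] \<or> hd v \<noteq> Eps"
    by (rule split_eps_prefix)
  have split: "nsplits (eps_run j @ expand_comp h) w = (j choose b) * nsplits (expand_comp h) v"
    if "h \<in> comps a" for j h
    using that unfolding w comps_def
    by (auto intro!: nsplits_eps_run_choose expand_comp_not_Nil expand_comp_all_ones v)
  have "(\<Sum>j\<le>i. \<Sum>h\<in>comps a. (-1) ^ (i + j) * of_nat (i choose j) *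
      ((-1) ^ (length h + 1) * of_nat (nsplits (eps_run j @ expand_comp h) w)) :: 'k) =
    (\<Sum>j\<le>i. \<Sum>h\<in>comps a. (-1) ^ (i + j) * of_nat ((i choose j) * (j choose b)) *
      ((-1) ^ (length h + 1) * of_nat (nsplits (expand_comp h) v)))"
    by (intro sum.cong refl) (simp add: split)
  also have "\<dots> = (\<Sum>j\<le>i. (-1) ^ (i + j) * of_nat ((i choose j) * (j choose b))) *
      (\<Sum>h\<in>comps a. (-1) ^ (length h + 1) * of_nat (nsplits (expand_comp h) v))"
    by (simp add: sum_product)
  also have "\<dots> = (if b = i then 1 else 0) * (if v = [Num a] then 1 else 0)"
    by (simp only: binomial_inversion alt_sum_comps[OF a])
  also have "\<dots> = (if w = replicate i Eps @ [Num a] then 1 else 0)"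
    using eps_prefix_inj[of b v i "[Num a]"] v unfolding w by auto
  finally show ?thesis .
qed

lemma alt_sum_eps_run:
  assumes f: "0 < f"
  shows "(\<Sum>e\<in>{1..f}. (-1) ^ (e + f) * of_nat ((f - 1) choose (e - 1)) * of_nat (comp_count e b)
      :: 'k::comm_ring_1) = (if b = f then 1 else 0)"
proof (cases b)
  case 0
  then show ?thesis using f by (simp add: comp_count_def)
next
  case (Suc b')
  obtain f' where f': "f = Suc f'"
    using f by (cases f) auto
  have "(\<Sum>e\<in>{1..f}. (-1) ^ (e + f) * of_nat ((f - 1) choose (e - 1)) * of_nat (comp_count e b) :: 'k) =
      (\<Sum>j\<in>{0..f'}. (-1) ^ (Suc j + f) * of_nat ((f - 1) choose j) * of_nat (comp_count (Suc j) b))"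
    unfolding f' One_nat_def sum.shift_bounds_cl_Suc_ivl by simp
  also have "\<dots> = (\<Sum>j\<le>f'. (-1) ^ (f' + j) * of_nat ((f' choose j) * (j choose b')))"
  proof (rule sum.cong)
    fix j
    have "(-1::'k) ^ (Suc j + f) = (-1) ^ (f' + j)"
      using f' by (simp add: add.commute)
    then show "(-1) ^ (Suc j + f) * of_nat ((f - 1) choose j) * of_nat (comp_count (Suc j) b) =
        ((-1) ^ (f' + j) * of_nat ((f' choose j) * (j choose b')) :: 'k)"
      by (simp add: comp_count_def Suc f' mult.assoc)
  qed auto
  also have "\<dots> = (if b = f then 1 else 0)"
    using binomial_inversion[where 'k='k, of f' b'] Suc f' by simp
  finally show ?thesis .
qed

lemma sum_take_drop_delta:
  "(\<Sum>u\<le>length w. (if take u w = x then 1 else 0) * (if drop u w = y then 1 else 0) :: 'k::comm_semiring_1) =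
    (if w = x @ y then 1 else 0)"
proof -
  have "(\<Sum>u\<le>length w. (if take u w = x then 1 else 0) * (if drop u w = y then 1 else 0) :: 'k) =
      (if length x \<in> {..length w}
       then (if take (length x) w = x then 1 else 0) * (if drop (length x) w = y then 1 else 0) else 0)"
    by (rule sum_eq_single) (auto dest!: arg_cong[where f=length])
  also have "\<dots> = (if w = x @ y then 1 else 0)"
    by (auto simp: append_eq_conv_conj dest: arg_cong[where f=length]) (metis append_take_drop_id)
  finally show ?thesis .
qed

section \<open>Compatible decompositions\<close>

lemma assemble_Nil [simp]: "assemble [] e = replicate e Eps"
  by (simp add: assemble_def)

lemma assemble_Cons [simp]: "assemble ((i, g) # bs) e = replicate i Eps @ map Num g @ assemble bs e"
  by (simp add: assemble_def)

definition dec_coef :: "(nat \<times> nat list) list \<Rightarrow> nat \<Rightarrow> (nat \<times> nat list) list \<Rightarrow> nat \<Rightarrow> nat" where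
  "dec_coef bs e cs f =
    (\<Prod>p < length cs. fst (cs ! p) choose fst (bs ! p)) * (if f = 0 then 1 else (f - 1) choose (e - 1))"

lemma dec_coef_Cons: "dec_coef ((j, h) # bs) e ((i, g) # cs) f = (i choose j) * dec_coef bs e cs f"
  unfolding dec_coef_def length_Cons prod.lessThan_Suc_shift by simp

lemma dec_coef_Nil: "dec_coef [] e [] f = (if f = 0 then 1 else (f - 1) choose (e - 1))"
  by (simp add: dec_coef_def)

lemma compat_dec_Nil:
  "compat_dec \<beta> \<alpha> bs e [] f \<longleftrightarrow>
    bs = [] \<and> \<beta> = replicate e Eps \<and> \<alpha> = replicate f Eps \<and>
    ((e = 0 \<and> f = 0) \<or> (1 \<le> e \<and> 1 \<le> f)) \<and> e \<le> f"
  by (auto simp: compat_dec_def)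

lemma compat_dec_Cons:
  "compat_dec \<beta> \<alpha> ((j, h) # bs) e ((i, g) # cs) f \<longleftrightarrow>
    (\<exists>\<beta>0 \<alpha>0. \<beta> = replicate j Eps @ map Num h @ \<beta>0 \<and> \<alpha> = replicate i Eps @ map Num g @ \<alpha>0 \<and>
      compat_dec \<beta>0 \<alpha>0 bs e cs f) \<and>
    j \<le> i \<and> h \<noteq> [] \<and> g \<noteq> [] \<and> positive h \<and> positive g \<and> comp_le h g"
  unfolding compat_dec_def by (auto simp: All_less_Suc2 positive_def)

lemma sum_take_mono: "k' \<le> k \<Longrightarrow> sum_list (take k' (xs :: nat list)) \<le> sum_list (take k xs)"
proof (induction xs arbitrary: k k')
  case (Cons x xs)
  then show ?case by (cases k; cases k') auto
qed simp

lemma comp_le_single: "comp_le h [a] \<longleftrightarrow> sum_list h = a"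
  by (simp add: comp_le_def cset_def)

lemma cset_drop_refines_tail:
  assumes le: "comp_le h0 (a # g')" and pos: "positive g'" and a: "a = sum_list (take k h0)"
  shows "cset g' \<subseteq> cset (drop k h0)"
proof
  fix x
  assume "x \<in> cset g'"
  then obtain i' where i': "0 < i'" "i' < length g'" "x = sum_list (take i' g')"
    by (auto simp: cset_def)
  have "0 < x"
    using i' pos by (cases g'; cases i') (auto simp: positive_def)
  have "a + x \<in> cset (a # g')"
    unfolding cset_def using i' by (auto intro!: exI[where x="Suc i'"])
  then have "a + x \<in> cset h0"
    using le by (auto simp: comp_le_def)
  then obtain k' where k': "0 < k'" "k' < length h0" "a + x = sum_list (take k' h0)"
    by (auto simp: cset_def)
  have "k < k'"
  proof (rule ccontr)
    assume "\<not> k < k'"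
    then have "sum_list (take k' h0) \<le> sum_list (take k h0)"
      by (intro sum_take_mono) simp
    then show False
      using a k' \<open>0 < x\<close> by simp
  qed
  then have "take k' h0 = take k h0 @ take (k' - k) (drop k h0)"
    by (metis le_add_diff_inverse less_imp_le take_add)
  then have "x = sum_list (take (k' - k) (drop k h0))"
    using a k' by simp
  moreover have "0 < k' - k" "k' - k < length (drop k h0)"
    using \<open>k < k'\<close> k' by auto
  ultimately show "x \<in> cset (drop k h0)"
    unfolding cset_def by blast
qed

text \<open>If h refines a # g', the partial sum a of a # g' is a partial sum of h; cutting h there
  gives a prefix summing to a and a remainder refining g'.\<close>

lemma comp_le_split:
  assumes le: "comp_le h0 (a # g')" and g': "g' \<noteq> []" and pos: "positive g'"
  shows "\<exists>h h2. h0 = h @ h2 \<and> h \<noteq> [] \<and> h2 \<noteq> [] \<and> sum_list h = a \<and> comp_le h2 g'"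
proof -
  have "a \<in> cset (a # g')"
    unfolding cset_def using g' by (auto intro!: exI[where x=1])
  then have "a \<in> cset h0"
    using le by (auto simp: comp_le_def)
  then obtain k where k: "0 < k" "k < length h0" "a = sum_list (take k h0)"
    by (auto simp: cset_def)
  have "sum_list h0 = sum_list (take k h0) + sum_list (drop k h0)"
    by (metis append_take_drop_id sum_list_append)
  then have "sum_list (drop k h0) = sum_list g'"
    using le k by (simp add: comp_le_def)
  then have "comp_le (drop k h0) g'"
    using cset_drop_refines_tail[OF le pos k(3)] by (simp add: comp_le_def)
  then show ?thesis
    using k by (intro exI[of _ "take k h0"] exI[of _ "drop k h0"]) auto
qed

text \<open>The first block of a decomposition of \<epsilon>^i a \<alpha>' is \<epsilon>^i g with g = a # g'.  If g' is
  nonempty, the part of the refining block beyond the partial sum a becomes, together with g',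
  the first block (without leading \<epsilon>'s) of a decomposition of \<alpha>'.\<close>

lemma compat_dec_split_first:
  assumes dec: "compat_dec \<beta> (replicate i Eps @ Num a # \<alpha>') bs e cs f"
  shows "\<exists>j h \<beta>' bs' e' cs' f'. \<beta> = replicate j Eps @ map Num h @ \<beta>' \<and> j \<le> i \<and>
    h \<noteq> [] \<and> positive h \<and> sum_list h = a \<and> compat_dec \<beta>' \<alpha>' bs' e' cs' f' \<and>
    dec_coef bs e cs f = (i choose j) * dec_coef bs' e' cs' f'"
proof (cases cs)
  case Nil
  then have "replicate i Eps @ Num a # \<alpha>' = replicate f Eps"
    using dec by (simp add: compat_dec_Nil)
  then have "Num a \<in> set (replicate f Eps)"
    by (metis in_set_conv_decomp)
  then show ?thesis
    by (simp split: if_splits)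
next
  case (Cons c cs0)
  obtain i0 g where c: "c = (i0, g)"
    by (cases c)
  obtain j h0 bs0 where bs: "bs = (j, h0) # bs0"
    using dec Cons by (cases bs) (auto simp: compat_dec_def)
  from dec[unfolded bs Cons c compat_dec_Cons] obtain \<beta>0 \<alpha>0 where
    \<beta>: "\<beta> = replicate j Eps @ map Num h0 @ \<beta>0" and
    \<alpha>: "replicate i Eps @ Num a # \<alpha>' = replicate i0 Eps @ map Num g @ \<alpha>0" and
    dec0: "compat_dec \<beta>0 \<alpha>0 bs0 e cs0 f" and
    j: "j \<le> i0" and ne: "h0 \<noteq> []" "g \<noteq> []" and pos: "positive h0" "positive g" and
    le: "comp_le h0 g"
    by blast
  obtain g' where g: "g = a # g'" and i0: "i0 = i" and \<alpha>': "\<alpha>' = map Num g' @ \<alpha>0"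
    using eps_prefix_inj[of i "Num a # \<alpha>'" i0 "map Num g @ \<alpha>0"] \<alpha> ne(2)
    by (cases g) auto
  have coef: "dec_coef bs e cs f = (i choose j) * dec_coef bs0 e cs0 f"
    using bs Cons c i0 by (simp add: dec_coef_Cons)
  show ?thesis
  proof (cases "g' = []")
    case True
    then have "sum_list h0 = a" "\<alpha>' = \<alpha>0"
      using le g \<alpha>' by (auto simp: comp_le_single)
    then show ?thesis
      using \<beta> j i0 ne pos dec0 coef by blast
  next
    case False
    obtain h h2 where hh: "h0 = h @ h2" "h \<noteq> []" "h2 \<noteq> []" "sum_list h = a" "comp_le h2 g'"
      using comp_le_split[of h0 a g'] le g False pos by auto
    have "compat_dec (map Num h2 @ \<beta>0) \<alpha>' ((0, h2) # bs0) e ((0, g') # cs0) f"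
      unfolding compat_dec_Cons using dec0 \<alpha>' hh False pos g by auto
    moreover have "dec_coef bs e cs f = (i choose j) * dec_coef ((0, h2) # bs0) e ((0, g') # cs0) f"
      using coef by (simp add: dec_coef_Cons)
    moreover have "\<beta> = replicate j Eps @ map Num h @ (map Num h2 @ \<beta>0)"
      using \<beta> hh by simp
    ultimately show ?thesis
      using j i0 hh pos by fastforce
  qed
qed

lemma compat_dec_prepend:
  assumes "j \<le> i" "h \<noteq> []" "positive h" "sum_list h = a" "compat_dec \<beta>' \<alpha>' bs' e' cs' f'"
  shows "compat_dec (replicate j Eps @ map Num h @ \<beta>') (replicate i Eps @ Num a # \<alpha>')
      ((j, h) # bs') e' ((i, [a]) # cs') f'"
proof -
  have "0 < a"
    using assms(2-4) by (cases h) auto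
  then show ?thesis
    unfolding compat_dec_Cons using assms by (auto simp: comp_le_single)
qed

lemma map_Num_prefix_inj:
  assumes "map Num h @ x = map Num h2 @ y" "sum_list h = sum_list h2"
    and "positive h" "positive h2" "h \<noteq> []" "h2 \<noteq> []"
  shows "h = h2 \<and> x = y"
  using assms
proof (induction h arbitrary: h2)
  case (Cons s t)
  then obtain t2 where h2: "h2 = s # t2"
    by (cases h2) auto
  show ?case
  proof (cases "t = []")
    case True
    then have "t2 = []"
      using Cons h2 by (cases t2) auto
    then show ?thesis
      using Cons True h2 by simp
  next
    case False
    then have "t2 \<noteq> []"
      using Cons h2 by (cases t; cases t2) auto
    then show ?thesis
      using Cons.IH[of t2] Cons.prems h2 False by simp
  qed
qed simp

lemma block_prefix_inj:
  assumes "replicate j Eps @ map Num h @ b = replicate j2 Eps @ map Num h2 @ b2"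
    and "sum_list h = sum_list h2" "positive h" "positive h2" "h \<noteq> []" "h2 \<noteq> []"
  shows "j = j2 \<and> h = h2 \<and> b = b2"
proof -
  have "j = j2 \<and> map Num h @ b = map Num h2 @ b2"
    using assms(5,6) by (intro eps_prefix_inj[OF assms(1)]) (auto simp: neq_Nil_conv)
  then show ?thesis
    using map_Num_prefix_inj assms by blast
qed

lemma compat_dec_all_Eps:
  assumes "compat_dec \<beta> \<alpha> bs e cs f" "\<forall>x\<in>set \<alpha>. x = Eps"
  shows "bs = [] \<and> cs = [] \<and> \<beta> = replicate e Eps \<and> \<alpha> = replicate f Eps"
proof (cases cs)
  case Nil
  then show ?thesis
    using assms by (simp add: compat_dec_Nil)
next
  case (Cons c cs0)
  obtain i g where c: "c = (i, g)"
    by (cases c)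
  have "\<alpha> = assemble cs f" "snd (cs ! 0) \<noteq> []"
    using assms(1) Cons by (auto simp: compat_dec_def)
  then have "Num (hd g) \<in> set \<alpha>"
    using Cons c by (cases g) auto
  then show ?thesis
    using assms(2) by auto
qed

lemma dec_coef_unique:
  "compat_dec \<beta> \<alpha> bs e cs f \<Longrightarrow> compat_dec \<beta> \<alpha> bs' e' cs' f' \<Longrightarrow>
    dec_coef bs e cs f = dec_coef bs' e' cs' f'"
proof (induction "length \<alpha>" arbitrary: \<alpha> \<beta> bs e cs f bs' e' cs' f' rule: less_induct)
  case less
  obtain i v where \<alpha>: "\<alpha> = replicate i Eps @ v" and v: "v = [] \<or> hd v \<noteq> Eps"
    by (rule split_eps_prefix)
  show ?case
  proof (cases v)
    case Nil
    then have "\<forall>x\<in>set \<alpha>. x = Eps"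
      using \<alpha> by simp
    then show ?thesis
      using compat_dec_all_Eps less.prems by (metis dec_coef_Nil length_replicate)
  next
    case (Cons x \<alpha>')
    then obtain a where \<alpha>a: "\<alpha> = replicate i Eps @ Num a # \<alpha>'"
      using \<alpha> v by (cases x) auto
    obtain j h \<beta>1 bs1 e1 cs1 f1 where s1: "\<beta> = replicate j Eps @ map Num h @ \<beta>1"
      "h \<noteq> []" "positive h" "sum_list h = a" "compat_dec \<beta>1 \<alpha>' bs1 e1 cs1 f1"
      "dec_coef bs e cs f = (i choose j) * dec_coef bs1 e1 cs1 f1"
      using compat_dec_split_first[OF less.prems(1)[unfolded \<alpha>a]] by blast
    obtain j2 h2 \<beta>2 bs2 e2 cs2 f2 where s2: "\<beta> = replicate j2 Eps @ map Num h2 @ \<beta>2"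
      "h2 \<noteq> []" "positive h2" "sum_list h2 = a" "compat_dec \<beta>2 \<alpha>' bs2 e2 cs2 f2"
      "dec_coef bs' e' cs' f' = (i choose j2) * dec_coef bs2 e2 cs2 f2"
      using compat_dec_split_first[OF less.prems(2)[unfolded \<alpha>a]] by blast
    have "j = j2 \<and> h = h2 \<and> \<beta>1 = \<beta>2"
      using s1 s2 by (intro block_prefix_inj) auto
    moreover have "length \<alpha>' < length \<alpha>"
      using \<alpha>a by simp
    ultimately have "dec_coef bs1 e1 cs1 f1 = dec_coef bs2 e2 cs2 f2"
      using less.hyps s1(5) s2(5) by blast
    then show ?thesis
      using s1(6) s2(6) \<open>j = j2 \<and> h = h2 \<and> \<beta>1 = \<beta>2\<close> by simp
  qed
qed

lemma ccoef_eq_dec_coef: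
  assumes "compat_dec \<beta> \<alpha> bs e cs f"
  shows "ccoef \<alpha> \<beta> = dec_coef bs e cs f"
  unfolding ccoef_def dec_coef_def[symmetric]
proof (rule someI2_ex)
  show "\<exists>v bs' e' cs' f'. compat_dec \<beta> \<alpha> bs' e' cs' f' \<and> v = dec_coef bs' e' cs' f'"
    using assms by blast
qed (use dec_coef_unique[OF assms] in auto)

lemma ncomp_simps [simp]:
  "ncomp []"
  "ncomp (x # xs) \<longleftrightarrow> x \<noteq> Num 0 \<and> ncomp xs"
  "ncomp (xs @ ys) \<longleftrightarrow> ncomp xs \<and> ncomp ys"
  "ncomp (replicate j Eps)"
  "ncomp (map Num h) \<longleftrightarrow> positive h"
  by (auto simp: ncomp_def positive_def)

definition refinements :: "ntil list \<Rightarrow> ntil list set" where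
  "refinements \<alpha> = {\<beta>. ncomp \<beta> \<and> tprec \<beta> \<alpha>}"

lemma refinements_eps_run:
  "refinements (replicate f Eps) = (\<lambda>e. replicate e Eps) ` {e. e \<le> f \<and> (e = 0 \<longleftrightarrow> f = 0)}"
proof (intro equalityI subsetI)
  fix \<beta>
  assume "\<beta> \<in> refinements (replicate f Eps)"
  then obtain bs e cs f0 where dec: "compat_dec \<beta> (replicate f Eps) bs e cs f0"
    by (auto simp: refinements_def tprec_def)
  then have "cs = []" "\<beta> = replicate e Eps" "f0 = f"
    using compat_dec_all_Eps[OF dec] by auto
  then show "\<beta> \<in> (\<lambda>e. replicate e Eps) ` {e. e \<le> f \<and> (e = 0 \<longleftrightarrow> f = 0)}"
    using dec by (auto simp: compat_dec_Nil)
next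
  fix \<beta>
  assume "\<beta> \<in> (\<lambda>e. replicate e Eps) ` {e. e \<le> f \<and> (e = 0 \<longleftrightarrow> f = 0)}"
  then obtain e where "\<beta> = replicate e Eps" "e \<le> f" "e = 0 \<longleftrightarrow> f = 0"
    by auto
  then have "compat_dec \<beta> (replicate f Eps) [] e [] f"
    by (auto simp: compat_dec_Nil)
  then show "\<beta> \<in> refinements (replicate f Eps)"
    using \<open>\<beta> = replicate e Eps\<close> by (auto simp: refinements_def tprec_def)
qed

lemma ccoef_eps_run:
  assumes "e \<le> f" "e = 0 \<longleftrightarrow> f = 0"
  shows "ccoef (replicate f Eps) (replicate e Eps) = (if f = 0 then 1 else (f - 1) choose (e - 1))"
proof -
  have "compat_dec (replicate e Eps) (replicate f Eps) [] e [] f"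
    using assms by (auto simp: compat_dec_Nil)
  then show ?thesis
    by (simp add: ccoef_eq_dec_coef dec_coef_Nil)
qed

definition prepend_block :: "nat \<times> nat list \<times> ntil list \<Rightarrow> ntil list" where
  "prepend_block = (\<lambda>(j, h, \<beta>). replicate j Eps @ map Num h @ \<beta>)"

lemma refinements_Cons_block:
  "refinements (replicate i Eps @ Num a # \<alpha>') = prepend_block ` ({..i} \<times> comps a \<times> refinements \<alpha>')"
proof (intro equalityI subsetI)
  fix \<beta>
  assume "\<beta> \<in> refinements (replicate i Eps @ Num a # \<alpha>')"
  then obtain bs e cs f where nc: "ncomp \<beta>" and dec: "compat_dec \<beta> (replicate i Eps @ Num a # \<alpha>') bs e cs f"
    by (auto simp: refinements_def tprec_def)
  obtain j h \<beta>' bs' e' cs' f' where "\<beta> = replicate j Eps @ map Num h @ \<beta>'" "j \<le> i" "h \<noteq> []"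
    "positive h" "sum_list h = a" "compat_dec \<beta>' \<alpha>' bs' e' cs' f'"
    using compat_dec_split_first[OF dec] by blast
  then show "\<beta> \<in> prepend_block ` ({..i} \<times> comps a \<times> refinements \<alpha>')"
    using nc by (force simp: comps_def refinements_def tprec_def prepend_block_def)
next
  fix \<beta>
  assume "\<beta> \<in> prepend_block ` ({..i} \<times> comps a \<times> refinements \<alpha>')"
  then obtain j h \<beta>' bs' e' cs' f' where \<beta>: "\<beta> = replicate j Eps @ map Num h @ \<beta>'" "j \<le> i"
    "h \<in> comps a" "ncomp \<beta>'" "compat_dec \<beta>' \<alpha>' bs' e' cs' f'"
    by (auto simp: prepend_block_def refinements_def tprec_def)
  then have "compat_dec \<beta> (replicate i Eps @ Num a # \<alpha>') ((j, h) # bs') e' ((i, [a]) # cs') f'"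
    using compat_dec_prepend by (auto simp: comps_def)
  then show "\<beta> \<in> refinements (replicate i Eps @ Num a # \<alpha>')"
    using \<beta> by (auto simp: refinements_def tprec_def comps_def)
qed

lemma inj_on_prepend_block: "inj_on prepend_block ({..i} \<times> comps a \<times> B)"
proof (rule inj_onI)
  fix x y
  assume "x \<in> {..i} \<times> comps a \<times> B" "y \<in> {..i} \<times> comps a \<times> B" "prepend_block x = prepend_block y"
  moreover obtain j h \<beta> j' h' \<beta>' where "x = (j, h, \<beta>)" "y = (j', h', \<beta>')"
    by (cases x, cases y) auto
  ultimately show "x = y"
    using block_prefix_inj[of j h \<beta> j' h' \<beta>'] by (simp add: prepend_block_def comps_def)
qed

lemma ccoef_Cons_block:
  assumes "j \<le> i" "h \<in> comps a" "\<beta>' \<in> refinements \<alpha>'"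
  shows "ccoef (replicate i Eps @ Num a # \<alpha>') (prepend_block (j, h, \<beta>')) = (i choose j) * ccoef \<alpha>' \<beta>'"
proof -
  obtain bs' e' cs' f' where dec: "compat_dec \<beta>' \<alpha>' bs' e' cs' f'"
    using assms(3) by (auto simp: refinements_def tprec_def)
  then have "compat_dec (prepend_block (j, h, \<beta>')) (replicate i Eps @ Num a # \<alpha>')
      ((j, h) # bs') e' ((i, [a]) # cs') f'"
    using assms(1,2) compat_dec_prepend by (auto simp: comps_def prepend_block_def)
  then show ?thesis
    by (simp add: ccoef_eq_dec_coef[OF dec] ccoef_eq_dec_coef dec_coef_Cons)
qed

section \<open>The inversion identity\<close>

lemma alt_sum_refinements_eps_run:
  "(\<Sum>\<beta>\<in>refinements (replicate f Eps). (-1) ^ (length \<beta> + f) * of_nat (ccoef (replicate f Eps) \<beta>) *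
      of_nat (nsplits (expand \<beta>) w) :: 'k::comm_ring_1) = (if w = replicate f Eps then 1 else 0)"
proof -
  define E where "E = {e. e \<le> f \<and> (e = 0 \<longleftrightarrow> f = 0)}"
  have "inj_on (\<lambda>e. replicate e Eps) E"
    by (rule inj_onI) (auto dest: arg_cong[where f=length])
  then have "(\<Sum>\<beta>\<in>refinements (replicate f Eps). (-1) ^ (length \<beta> + f) *
      of_nat (ccoef (replicate f Eps) \<beta>) * of_nat (nsplits (expand \<beta>) w) :: 'k) =
    (\<Sum>e\<in>E. (-1) ^ (e + f) * of_nat (if f = 0 then 1 else (f - 1) choose (e - 1)) *
      of_nat (nsplits (eps_run e) w))"
    unfolding refinements_eps_run E_def[symmetric] by (simp add: sum.reindex ccoef_eps_run E_def)
  also have "\<dots> = (if w = replicate f Eps then 1 else 0)"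
  proof (cases "f = 0")
    case True
    then have "E = {0}"
      by (auto simp: E_def)
    then show ?thesis
      using True by (simp add: nsplits_Nil_left)
  next
    case False
    then have E: "E = {1..f}"
      by (auto simp: E_def)
    show ?thesis
    proof (cases "set w \<subseteq> {Eps}")
      case True
      then have w: "w = replicate (length w) Eps"
        by (metis replicate_length_same singletonD subsetD)
      have "(\<Sum>e\<in>E. (-1) ^ (e + f) * of_nat (if f = 0 then 1 else (f - 1) choose (e - 1)) *
          of_nat (nsplits (eps_run e) w) :: 'k) =
        (\<Sum>e\<in>{1..f}. (-1) ^ (e + f) * of_nat ((f - 1) choose (e - 1)) * of_nat (comp_count e (length w)))"
        using True False by (simp add: E nsplits_eps_run)
      also have "\<dots> = (if length w = f then 1 else 0)"
        using alt_sum_eps_run False by blast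
      finally show ?thesis
        using w by (auto dest: arg_cong[where f=length])
    next
      case False
      then show ?thesis
        by (auto simp: nsplits_eps_run)
    qed
  qed
  finally show ?thesis .
qed

lemma nsplits_prepend_block:
  assumes "h \<noteq> []"
  shows "nsplits (expand (prepend_block (j, h, \<beta>'))) w =
    (\<Sum>u\<le>length w. nsplits (eps_run j @ expand_comp h) (take u w) * nsplits (expand \<beta>') (drop u w))"
proof -
  have "eps_run j @ expand_comp h \<noteq> []" "snd (last (eps_run j @ expand_comp h))"
    using assms expand_comp_not_Nil last_expand_comp by auto
  then show ?thesis
    using nsplits_append[of "eps_run j @ expand_comp h" "expand \<beta>'" w] by (simp add: prepend_block_def)
qed

text \<open>Refinements of \<epsilon>^i a \<alpha>' are \<epsilon>^j h \<beta>' with j \<le> i, h a composition of a and \<beta>' a refinement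
  of \<alpha>'.  The corresponding term factors over the splittings w = w1 @ w2, and the sums over
  (j, h) and over \<beta>' evaluate separately to the indicators of w1 = \<epsilon>^i a and w2 = \<alpha>'.\<close>

lemma alt_sum_refinements_Cons_block:
  fixes i a :: nat and \<alpha>' :: "ntil list"
  defines "\<alpha> \<equiv> replicate i Eps @ Num a # \<alpha>'"
  assumes a: "0 < a"
    and IH: "\<And>w. (\<Sum>\<beta>'\<in>refinements \<alpha>'. (-1) ^ (length \<beta>' + length \<alpha>') * of_nat (ccoef \<alpha>' \<beta>') *
      of_nat (nsplits (expand \<beta>') w) :: 'k::comm_ring_1) = (if w = \<alpha>' then 1 else 0)"
  shows "(\<Sum>\<beta>\<in>refinements \<alpha>. (-1) ^ (length \<beta> + length \<alpha>) * of_nat (ccoef \<alpha> \<beta>) *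
      of_nat (nsplits (expand \<beta>) w) :: 'k) = (if w = \<alpha> then 1 else 0)"
proof -
  define A where "A j h u = (-1) ^ (i + j) * of_nat (i choose j) *
    ((-1) ^ (length h + 1) * of_nat (nsplits (eps_run j @ expand_comp h) (take u w)) :: 'k)" for j h u
  define B where "B \<beta>' u = ((-1) ^ (length \<beta>' + length \<alpha>') * of_nat (ccoef \<alpha>' \<beta>') *
    of_nat (nsplits (expand \<beta>') (drop u w)) :: 'k)" for \<beta>' u
  define T where "T \<beta> = ((-1) ^ (length \<beta> + length \<alpha>) * of_nat (ccoef \<alpha> \<beta>) *
    of_nat (nsplits (expand \<beta>) w) :: 'k)" for \<beta>
  have T: "T (prepend_block (j, h, \<beta>')) = (\<Sum>u\<le>length w. A j h u * B \<beta>' u)"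
    if "j \<le> i" "h \<in> comps a" "\<beta>' \<in> refinements \<alpha>'" for j h \<beta>'
  proof -
    have "h \<noteq> []"
      using that by (auto simp: comps_def)
    moreover have "length (prepend_block (j, h, \<beta>')) + length \<alpha> =
        (i + j) + (length h + 1) + (length \<beta>' + length \<alpha>')"
      by (simp add: prepend_block_def \<alpha>_def)
    ultimately show ?thesis
      unfolding T_def A_def B_def ccoef_Cons_block[OF that, folded \<alpha>_def]
        nsplits_prepend_block[OF \<open>h \<noteq> []\<close>] of_nat_sum of_nat_mult sum_distrib_left
      by (intro sum.cong refl) (simp add: power_add ac_simps)
  qed
  have "(\<Sum>\<beta>\<in>refinements \<alpha>. T \<beta>) = (\<Sum>j\<le>i. \<Sum>h\<in>comps a. \<Sum>\<beta>'\<in>refinements \<alpha>'. T (prepend_block (j, h, \<beta>')))"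
    unfolding \<alpha>_def refinements_Cons_block
    by (simp add: sum.reindex[OF inj_on_prepend_block] sum.cartesian_product)
  also have "\<dots> = (\<Sum>j\<le>i. \<Sum>h\<in>comps a. \<Sum>u\<le>length w. A j h u * (\<Sum>\<beta>'\<in>refinements \<alpha>'. B \<beta>' u))"
    by (intro sum.cong refl) (simp add: T sum.swap[where A="refinements \<alpha>'"] sum_distrib_left)
  also have "\<dots> = (\<Sum>u\<le>length w. (\<Sum>j\<le>i. \<Sum>h\<in>comps a. A j h u) * (\<Sum>\<beta>'\<in>refinements \<alpha>'. B \<beta>' u))"
    by (simp add: sum_distrib_right sum.swap[where B="{..length w}"])
  also have "\<dots> = (\<Sum>u\<le>length w. (if take u w = replicate i Eps @ [Num a] then 1 else 0) *
      (if drop u w = \<alpha>' then 1 else 0))"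
    unfolding A_def B_def by (simp only: alt_sum_eps_comps[OF a] IH)
  also have "\<dots> = (if w = \<alpha> then 1 else 0)"
    unfolding \<alpha>_def sum_take_drop_delta by simp
  finally show ?thesis
    unfolding T_def .
qed

lemma alt_sum_refinements:
  "ncomp \<alpha> \<Longrightarrow> (\<Sum>\<beta>\<in>refinements \<alpha>. (-1) ^ (length \<beta> + length \<alpha>) * of_nat (ccoef \<alpha> \<beta>) *
    of_nat (nsplits (expand \<beta>) w) :: 'k::comm_ring_1) = (if w = \<alpha> then 1 else 0)"
proof (induction "length \<alpha>" arbitrary: \<alpha> w rule: less_induct)
  case less
  obtain i v where \<alpha>: "\<alpha> = replicate i Eps @ v" and v: "v = [] \<or> hd v \<noteq> Eps"
    by (rule split_eps_prefix)
  show ?case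
  proof (cases v)
    case Nil
    then show ?thesis
      using alt_sum_refinements_eps_run[where 'k='k and f=i and w=w] \<alpha> by simp
  next
    case (Cons x \<alpha>')
    then obtain a where \<alpha>a: "\<alpha> = replicate i Eps @ Num a # \<alpha>'"
      using \<alpha> v by (cases x) auto
    then have "0 < a" "ncomp \<alpha>'"
      using less.prems by auto
    then show ?thesis
      using alt_sum_refinements_Cons_block[where 'k='k, of a \<alpha>' i] less.hyps[of \<alpha>'] \<alpha>a by simp
  qed
qed

section \<open>Coefficients of the quasisymmetric functions\<close>

definition supp :: "(nat \<Rightarrow> ntil) \<Rightarrow> nat set" where
  "supp m = {i. m i \<noteq> Num 0}"

definition exp_word :: "(nat \<Rightarrow> ntil) \<Rightarrow> ntil list" where
  "exp_word m = map m (sorted_list_of_set (supp m))"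

lemma exp_word_Min:
  assumes fin: "finite (supp m)" and ne: "supp m \<noteq> {}"
  shows "exp_word m = m (Min (supp m)) # exp_word (m(Min (supp m) := Num 0))"
proof -
  let ?v = "Min (supp m)"
  have supp': "supp (m(?v := Num 0)) = supp m - {?v}"
    by (auto simp: supp_def)
  have "exp_word m = m ?v # map m (sorted_list_of_set (supp m - {?v}))"
    unfolding exp_word_def using sorted_list_of_set_nonempty[OF fin ne] by simp
  also have "map m (sorted_list_of_set (supp m - {?v})) =
      map (m(?v := Num 0)) (sorted_list_of_set (supp m - {?v}))"
    using fin by (intro map_cong refl) auto
  finally show ?thesis
    unfolding exp_word_def supp' .
qed

lemma mono_of_Nil [simp]: "mono_of [] = (\<lambda>_. Num 0)"
  by (simp add: mono_of_def)

lemma mono_of_Cons [simp]: "mono_of ((n, e) # ps) = (mono_of ps)(n := tadd (mono_of ps n) e)"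
  by (simp add: mono_of_def)

lemma mono_of_notin: "v \<notin> set n \<Longrightarrow> mono_of (zip n es) v = Num 0"
proof (induction n arbitrary: es)
  case (Cons x n)
  then show ?case by (cases es) auto
qed simp

lemma supp_mono_of:
  "length n = length es \<Longrightarrow> Num 0 \<notin> set es \<Longrightarrow> supp (mono_of (zip n es)) = set n"
proof (induction n arbitrary: es)
  case Nil
  then show ?case by (simp add: supp_def)
next
  case (Cons x n)
  then obtain e es' where es: "es = e # es'"
    by (cases es) auto
  then have "supp (mono_of (zip n es')) = set n"
    using Cons by simp
  then show ?case
    using es Cons.prems by (auto simp: supp_def)
qed

lemma mono_of_replicate_prefix:
  assumes "k \<le> length es" "v \<notin> set n'"
  shows "mono_of (zip (replicate k v @ n') es) = (mono_of (zip n' (drop k es)))(v := tsum (take k es))"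
  using assms(1)
proof (induction k arbitrary: es)
  case 0
  then show ?case
    using mono_of_notin[OF assms(2)] by (auto simp: fun_eq_iff)
next
  case (Suc k)
  then obtain e es' where "es = e # es'"
    by (cases es) auto
  then show ?case
    using Suc by (auto simp: fun_eq_iff)
qed

lemma replicate_prefix_inj:
  assumes "replicate k v @ a = replicate k' v @ b" "v \<notin> set a" "v \<notin> set b"
  shows "k = k' \<and> a = b"
  using assms
proof (induction k arbitrary: k')
  case 0
  then show ?case by (cases k') auto
next
  case (Suc k)
  then show ?case by (cases k') auto
qed

text \<open>The index sequences n_1 \<le> ... \<le> n_N, all at least lo, that realise the monomial m from
  the exponent list xs: the terms of the series of xs contributing to the coefficient of m.\<close>

definition fillings :: "nat \<Rightarrow> (ntil \<times> bool) list \<Rightarrow> (nat \<Rightarrow> ntil) \<Rightarrow> nat list set" where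
  "fillings lo xs m = {n. length n = length xs \<and> sorted n \<and> (\<forall>x\<in>set n. lo \<le> x) \<and>
     (\<forall>l. Suc l < length n \<and> snd (xs ! l) \<longrightarrow> n ! l < n ! Suc l) \<and> mono_of (zip n (map fst xs)) = m}"

definition no_zero_exps :: "(ntil \<times> bool) list \<Rightarrow> bool" where
  "no_zero_exps xs \<longleftrightarrow> (\<forall>p\<in>set xs. fst p \<noteq> Num 0)"

lemma no_zero_exps_drop: "no_zero_exps xs \<Longrightarrow> no_zero_exps (drop k xs)"
  by (auto simp: no_zero_exps_def dest: in_set_dropD)

lemma supp_fillings: "n \<in> fillings lo xs m \<Longrightarrow> no_zero_exps xs \<Longrightarrow> supp m = set n"
  using supp_mono_of[of n "map fst xs"] by (force simp: fillings_def no_zero_exps_def)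

lemma finite_fillings: "no_zero_exps xs \<Longrightarrow> finite (fillings lo xs m)"
proof (cases "finite (supp m)")
  case True
  assume nz: "no_zero_exps xs"
  have "fillings lo xs m \<subseteq> {n. set n \<subseteq> supp m \<and> length n = length xs}"
    using supp_fillings[OF _ nz] by (auto simp: fillings_def)
  then show ?thesis
    using finite_lists_length_eq[OF True] by (rule finite_subset)
next
  case False
  assume nz: "no_zero_exps xs"
  then have "fillings lo xs m = {}"
    using supp_fillings[OF _ nz] False by (metis List.finite_set equals0I)
  then show ?thesis
    by simp
qed

lemma sorted_min_run:
  assumes srt: "sorted n" and v_in: "v \<in> set n" and v_min: "\<forall>y\<in>set n. v \<le> y"
  obtains k n' where "0 < k" "n = replicate k v @ n'" "\<forall>y\<in>set n'. v < y"
proof -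
  define k where "k = length (takeWhile (\<lambda>x. x = v) n)"
  define n' where "n' = dropWhile (\<lambda>x. x = v) n"
  have "takeWhile (\<lambda>x. x = v) n = replicate k v"
    unfolding k_def by (rule replicate_length_same[symmetric]) (auto dest: set_takeWhileD)
  then have nn: "n = replicate k v @ n'"
    unfolding n'_def by (metis takeWhile_dropWhile_id)
  have gt: "\<forall>y\<in>set n'. v < y"
  proof
    fix y
    assume y: "y \<in> set n'"
    then have "n' \<noteq> []"
      by auto
    have "hd n' \<noteq> v"
      using hd_dropWhile[of "\<lambda>x. x = v" n] \<open>n' \<noteq> []\<close> by (simp add: n'_def)
    moreover have "hd n' \<in> set n"
      using \<open>n' \<noteq> []\<close> by (subst nn) simp
    ultimately have "v < hd n'"
      using v_min by force
    moreover have "hd n' \<le> y"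
      using srt y \<open>n' \<noteq> []\<close> nn by (cases n') (auto simp: sorted_append)
    ultimately show "v < y"
      by simp
  qed
  moreover have "0 < k"
    using v_in gt nn by (cases k) auto
  ultimately show ?thesis
    using that nn by blast
qed

lemma fillings_cut:
  assumes nz: "no_zero_exps xs" and n: "n \<in> fillings lo xs m"
    and fin: "finite (supp m)" and ne: "supp m \<noteq> {}" and v: "v = Min (supp m)"
  obtains k n' where "k \<in> {1..length xs}" "block xs k (m v)" "n = replicate k v @ n'"
    "n' \<in> fillings (Suc v) (drop k xs) (m(v := Num 0))"
proof -
  from n have len: "length n = length xs" and srt: "sorted n"
    and flags: "\<forall>l. Suc l < length n \<and> snd (xs ! l) \<longrightarrow> n ! l < n ! Suc l"
    and mono: "mono_of (zip n (map fst xs)) = m"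
    by (auto simp: fillings_def)
  have supp: "supp m = set n"
    using supp_fillings[OF n nz] .
  have v_in: "v \<in> set n" and v_min: "\<forall>y\<in>set n. v \<le> y"
    using Min_in[OF fin ne] Min_le[OF fin] v supp by auto
  obtain k n' where "0 < k" and nn: "n = replicate k v @ n'" and gt: "\<forall>y\<in>set n'. v < y"
    using sorted_min_run[OF srt v_in v_min] .
  then have srt': "sorted n'" and v_notin: "v \<notin> set n'"
    using srt by (auto simp: sorted_append)
  have k: "k \<in> {1..length xs}"
    using \<open>0 < k\<close> nn len by simp
  have m: "m = (mono_of (zip n' (drop k (map fst xs))))(v := tsum (take k (map fst xs)))"
    using mono mono_of_replicate_prefix[of k "map fst xs" v n'] k v_notin nn by simp
  have "\<forall>l < k - 1. \<not> snd (xs ! l)"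
  proof (intro allI impI)
    fix l
    assume "l < k - 1"
    then have "n ! l = v" "n ! Suc l = v" "Suc l < length n"
      using nn by (auto simp: nth_append)
    then show "\<not> snd (xs ! l)"
      using flags by auto
  qed
  then have "block xs k (m v)"
    using m by (simp add: block_def take_map)
  moreover have "n' \<in> fillings (Suc v) (drop k xs) (m(v := Num 0))"
    unfolding fillings_def
  proof (intro CollectI conjI)
    show "length n' = length (drop k xs)"
      using len nn by simp
    show "\<forall>l. Suc l < length n' \<and> snd (drop k xs ! l) \<longrightarrow> n' ! l < n' ! Suc l"
    proof (intro allI impI)
      fix l
      assume "Suc l < length n' \<and> snd (drop k xs ! l)"
      then have "n ! (k + l) < n ! Suc (k + l)"
        using flags nn k by auto
      then show "n' ! l < n' ! Suc l"
        using nn by (simp add: nth_append)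
    qed
    show "mono_of (zip n' (map fst (drop k xs))) = m(v := Num 0)"
      using m mono_of_notin[OF v_notin] by (auto simp: fun_eq_iff drop_map)
  qed (use srt' gt in auto)
  ultimately show ?thesis
    using that k nn by blast
qed

lemma fillings_prepend:
  assumes k: "k \<in> {1..length xs}" and blk: "block xs k (m v)" and "lo \<le> v"
    and n': "n' \<in> fillings (Suc v) (drop k xs) (m(v := Num 0))"
  shows "replicate k v @ n' \<in> fillings lo xs m"
proof -
  let ?n = "replicate k v @ n'"
  from n' have len': "length n' = length xs - k" and srt': "sorted n'" and ge: "\<forall>x\<in>set n'. Suc v \<le> x"
    and flags': "\<forall>l. Suc l < length n' \<and> snd (drop k xs ! l) \<longrightarrow> n' ! l < n' ! Suc l"
    and mono': "mono_of (zip n' (map fst (drop k xs))) = m(v := Num 0)"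
    by (auto simp: fillings_def)
  have v_notin: "v \<notin> set n'"
    using ge by auto
  have "?n ! l < ?n ! Suc l" if l: "Suc l < length ?n" "snd (xs ! l)" for l
  proof -
    consider "l < k - 1" | "l = k - 1" | "k \<le> l"
      by linarith
    then show ?thesis
    proof cases
      case 1
      then show ?thesis
        using blk l by (auto simp: block_def)
    next
      case 2
      then have "n' \<noteq> []" "?n ! l = v" "?n ! Suc l = n' ! 0"
        using l k by (auto simp: nth_append)
      then show ?thesis
        using ge by (cases n') auto
    next
      case 3
      then obtain d where d: "l = k + d"
        by (metis le_add_diff_inverse)
      then have "n' ! d < n' ! Suc d"
        using flags' l k by auto
      then show ?thesis
        using d by (simp add: nth_append)
    qed
  qed
  moreover have "mono_of (zip ?n (map fst xs)) = m"
  proof -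
    have "mono_of (zip ?n (map fst xs)) =
        (mono_of (zip n' (drop k (map fst xs))))(v := tsum (take k (map fst xs)))"
      using mono_of_replicate_prefix[of k "map fst xs" v n'] k v_notin by simp
    also have "\<dots> = m"
      using mono' blk by (auto simp: block_def drop_map take_map fun_eq_iff)
    finally show ?thesis .
  qed
  ultimately show ?thesis
    using len' k srt' ge \<open>lo \<le> v\<close> by (auto simp: fillings_def sorted_append)
qed

lemma fillings_split:
  assumes nz: "no_zero_exps xs" and fin: "finite (supp m)" and sub: "supp m \<subseteq> {lo..}"
    and ne: "supp m \<noteq> {}" and v: "v = Min (supp m)"
  shows "fillings lo xs m = (\<Union>k\<in>{k\<in>{1..length xs}. block xs k (m v)}.
    (\<lambda>n'. replicate k v @ n') ` fillings (Suc v) (drop k xs) (m(v := Num 0)))"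
proof (intro equalityI subsetI)
  fix n
  assume "n \<in> fillings lo xs m"
  then obtain k n' where "k \<in> {1..length xs}" "block xs k (m v)" "n = replicate k v @ n'"
    "n' \<in> fillings (Suc v) (drop k xs) (m(v := Num 0))"
    by (rule fillings_cut[OF nz _ fin ne v])
  then show "n \<in> (\<Union>k\<in>{k\<in>{1..length xs}. block xs k (m v)}.
      (\<lambda>n'. replicate k v @ n') ` fillings (Suc v) (drop k xs) (m(v := Num 0)))"
    by blast
next
  fix n
  assume "n \<in> (\<Union>k\<in>{k\<in>{1..length xs}. block xs k (m v)}.
      (\<lambda>n'. replicate k v @ n') ` fillings (Suc v) (drop k xs) (m(v := Num 0)))"
  then obtain k n' where "k \<in> {1..length xs}" "block xs k (m v)" "n = replicate k v @ n'"
    "n' \<in> fillings (Suc v) (drop k xs) (m(v := Num 0))"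
    by blast
  moreover have "lo \<le> v"
    using Min_in[OF fin ne] v sub by auto
  ultimately show "n \<in> fillings lo xs m"
    using fillings_prepend by blast
qed

lemma card_fillings_split:
  assumes nz: "no_zero_exps xs" and fin: "finite (supp m)" and sub: "supp m \<subseteq> {lo..}"
    and ne: "supp m \<noteq> {}" and v: "v = Min (supp m)"
  shows "card (fillings lo xs m) = (\<Sum>k\<in>{1..length xs}.
    if block xs k (m v) then card (fillings (Suc v) (drop k xs) (m(v := Num 0))) else 0)"
proof -
  let ?K = "{k\<in>{1..length xs}. block xs k (m v)}"
  let ?A = "\<lambda>k. (\<lambda>n'. replicate k v @ n') ` fillings (Suc v) (drop k xs) (m(v := Num 0))"
  have "fillings lo xs m = (\<Union>k\<in>?K. ?A k)"
    by (rule fillings_split[OF assms])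
  moreover have "?A i \<inter> ?A j = {}" if "i \<noteq> j" for i j
  proof -
    have "replicate i v @ n1 \<noteq> replicate j v @ n2"
      if "n1 \<in> fillings (Suc v) (drop i xs) (m(v := Num 0))"
        "n2 \<in> fillings (Suc v) (drop j xs) (m(v := Num 0))" for n1 n2
    proof -
      have "v \<notin> set n1" "v \<notin> set n2"
        using that by (auto simp: fillings_def)
      then show ?thesis
        using replicate_prefix_inj[of i v n1 j n2] \<open>i \<noteq> j\<close> by auto
    qed
    then show ?thesis
      by auto
  qed
  moreover have "finite (?A k)" for k
    using finite_fillings[OF no_zero_exps_drop[OF nz]] by simp
  ultimately have "card (fillings lo xs m) = (\<Sum>k\<in>?K. card (?A k))"
    by (simp only:) (rule card_UN_disjoint, auto)
  also have "\<dots> = (\<Sum>k\<in>?K. card (fillings (Suc v) (drop k xs) (m(v := Num 0))))"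
    by (intro sum.cong refl card_image) (auto simp: inj_on_def)
  also have "\<dots> = (\<Sum>k\<in>{1..length xs}.
      if block xs k (m v) then card (fillings (Suc v) (drop k xs) (m(v := Num 0))) else 0)"
    by (rule sum.inter_filter) simp
  finally show ?thesis .
qed

lemma fillings_empty:
  assumes "no_zero_exps xs" "\<not> (finite (supp m) \<and> supp m \<subseteq> {lo..})"
  shows "fillings lo xs m = {}"
proof (rule equals0I)
  fix n
  assume n: "n \<in> fillings lo xs m"
  then have "supp m = set n"
    using supp_fillings assms(1) by blast
  moreover have "\<forall>x\<in>set n. lo \<le> x"
    using n by (simp add: fillings_def)
  ultimately show False
    using assms(2) by auto
qed

lemma fillings_zero_monomial:
  assumes "no_zero_exps xs"
  shows "fillings lo xs (\<lambda>_. Num 0) = (if xs = [] then {[]} else {})"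
proof -
  have "n = []" if "n \<in> fillings lo xs (\<lambda>_. Num 0)" for n
    using supp_fillings[OF that assms] by (simp add: supp_def)
  moreover have "length n = length xs" if "n \<in> fillings lo xs (\<lambda>_. Num 0)" for n
    using that by (simp add: fillings_def)
  moreover have "[] \<in> fillings lo [] (\<lambda>_. Num 0)"
    by (simp add: fillings_def)
  ultimately show ?thesis
    by (metis empty_iff insertE insertI1 length_0_conv subsetI subset_antisym)
qed

lemma supp_fun_upd_Min:
  assumes fin: "finite (supp m)"
  shows "finite (supp (m(Min (supp m) := Num 0)))" "supp (m(Min (supp m) := Num 0)) \<subseteq> {Suc (Min (supp m))..}"
proof -
  have supp': "supp (m(Min (supp m) := Num 0)) = supp m - {Min (supp m)}"
    by (auto simp: supp_def)
  then show "finite (supp (m(Min (supp m) := Num 0)))"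
    using fin by simp
  show "supp (m(Min (supp m) := Num 0)) \<subseteq> {Suc (Min (supp m))..}"
  proof
    fix x
    assume "x \<in> supp (m(Min (supp m) := Num 0))"
    then have "Min (supp m) \<le> x" "x \<noteq> Min (supp m)"
      using supp' Min_le[OF fin] by auto
    then show "x \<in> {Suc (Min (supp m))..}"
      by simp
  qed
qed

lemma card_fillings:
  "no_zero_exps xs \<Longrightarrow>
    card (fillings lo xs m) = (if finite (supp m) \<and> supp m \<subseteq> {lo..} then nsplits xs (exp_word m) else 0)"
proof (induction "length xs" arbitrary: xs lo m rule: less_induct)
  case less
  show ?case
  proof (cases "finite (supp m) \<and> supp m \<subseteq> {lo..}")
    case False
    then show ?thesis
      unfolding fillings_empty[OF less.prems False] if_not_P[OF False] by simp
  next
    case True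
    then have fin: "finite (supp m)" and sub: "supp m \<subseteq> {lo..}"
      by auto
    show ?thesis
    proof (cases "supp m = {}")
      case True
      then have "m = (\<lambda>_. Num 0)"
        by (auto simp: supp_def)
      moreover have "exp_word m = []"
        using True by (simp add: exp_word_def)
      ultimately show ?thesis
        using True by (simp add: fillings_zero_monomial[OF less.prems])
    next
      case False
      define v where "v = Min (supp m)"
      define m' where "m' = m(v := Num 0)"
      have fin': "finite (supp m')" and sub': "supp m' \<subseteq> {Suc v..}"
        using supp_fun_upd_Min[OF fin] by (simp_all add: m'_def v_def)
      have "card (fillings lo xs m) = (\<Sum>k\<in>{1..length xs}.
          if block xs k (m v) then card (fillings (Suc v) (drop k xs) m') else 0)"
        unfolding m'_def by (rule card_fillings_split[OF less.prems fin sub False v_def])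
      also have "\<dots> = (\<Sum>k\<in>{1..length xs}. if block xs k (m v) then nsplits (drop k xs) (exp_word m') else 0)"
      proof (intro sum.cong refl)
        fix k
        assume "k \<in> {1..length xs}"
        then have "length (drop k xs) < length xs"
          by auto
        then have "card (fillings (Suc v) (drop k xs) m') = nsplits (drop k xs) (exp_word m')"
          using less.hyps[of "drop k xs" "Suc v" m'] no_zero_exps_drop[OF less.prems] fin' sub' by simp
        then show "(if block xs k (m v) then card (fillings (Suc v) (drop k xs) m') else 0) =
            (if block xs k (m v) then nsplits (drop k xs) (exp_word m') else 0)"
          by simp
      qed
      also have "\<dots> = nsplits xs (exp_word m)"
        unfolding exp_word_Min[OF fin False] m'_def v_def by (simp add: nsplits.simps)
      finally show ?thesis
        using fin sub by simp
    qed
  qed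
qed

lemma sorted_wrt_less_iff:
  "sorted_wrt (<) (t :: nat list) \<longleftrightarrow> sorted t \<and> (\<forall>l. Suc l < length t \<longrightarrow> t ! l < t ! Suc l)"
proof -
  have "transp ((<) :: nat \<Rightarrow> nat \<Rightarrow> bool)"
    by (auto simp: transp_def)
  then show ?thesis
    unfolding sorted_iff_nth_Suc by (auto simp: sorted_wrt_iff_nth_Suc_transp)
qed

lemma M_fun_coeff:
  assumes "ncomp \<alpha>"
  shows "M_fun \<alpha> m = (if finite (supp m) \<and> supp m \<subseteq> {1..} \<and> exp_word m = \<alpha> then 1 else 0)"
proof -
  have "{t \<in> {t. length t = length \<alpha> \<and> sorted_wrt (<) t \<and> (\<forall>x\<in>set t. 1 \<le> x)}.
      mono_of (zip t \<alpha>) = m} = fillings 1 (marked \<alpha>) m"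
    unfolding fillings_def sorted_wrt_less_iff by (auto simp: map_idI)
  moreover have "no_zero_exps (marked \<alpha>)"
    using assms by (auto simp: no_zero_exps_def ncomp_def)
  ultimately show ?thesis
    unfolding M_fun_def series_of_def by (simp add: card_fillings nsplits_marked)
qed

lemma F_fun_coeff:
  "F_fun \<beta> m = (if finite (supp m) \<and> supp m \<subseteq> {1..} then of_nat (nsplits (expand \<beta>) (exp_word m)) else 0)"
proof -
  have "fst p \<noteq> Num 0" if "p \<in> set (expand_entry x)" for p x
    using that by (cases x) (auto simp: expand_entry.simps)
  then have "no_zero_exps (expand \<beta>)"
    by (auto simp: no_zero_exps_def expand_def)
  moreover have "{n \<in> {n. length n = length (expand \<beta>) \<and> sorted n \<and> (\<forall>x\<in>set n. 1 \<le> x) \<and>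
      (\<forall>l. Suc l < length n \<and> snd (expand \<beta> ! l) \<longrightarrow> n ! l < n ! Suc l)}.
      mono_of (zip n (map fst (expand \<beta>))) = m} = fillings 1 (expand \<beta>) m"
    unfolding fillings_def by auto
  ultimately show ?thesis
    unfolding F_fun_def series_of_def by (simp add: card_fillings)
qed

theorem proposition3p2:
  fixes \<alpha> :: "ntil list"
    and m :: "nat \<Rightarrow> ntil"
  assumes kQ: "(1::'k::comm_ring_1) \<noteq> 0" "\<And>n::nat. 0 < n \<Longrightarrow> \<exists>y::'k. of_nat n * y = 1"
    and \<alpha>: "ncomp \<alpha>"
  shows "(M_fun \<alpha> m :: 'k) =
    (\<Sum>\<beta> \<in> {\<beta>. ncomp \<beta> \<and> tprec \<beta> \<alpha>}.
        (-1) ^ (length \<beta> + length \<alpha>) * of_nat (ccoef \<alpha> \<beta>) * F_fun \<beta> m)"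
proof (cases "finite (supp m) \<and> supp m \<subseteq> {1..}")
  case True
  then show ?thesis
    using alt_sum_refinements[OF \<alpha>, of "exp_word m", where 'k='k]
    by (simp add: M_fun_coeff[OF \<alpha>] F_fun_coeff refinements_def)
next
  case False
  then have "(M_fun \<alpha> m :: 'k) = 0" "\<And>\<beta>. (F_fun \<beta> m :: 'k) = 0"
    unfolding M_fun_coeff[OF \<alpha>] F_fun_coeff by auto
  then show ?thesis
    by simp
qed

end
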